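(* Let $\mathcal M$ be a small symmetric monoidal category. Then there is an isomorphism of short exact sequences of commutative monoids $$\begin{array}{ccccc} K(\mathrm{Pic}(\mathcal M)) & \xrightarrow{K(\iota_{\mathcal M})} & K(\mathcal M) & \xrightarrow{K(\pi_{\mathcal M})} & K(P(\mathcal M))\\ \downarrow\cong && \| && \downarrow\cong\\ U(K\mathcal M) & \longrightarrow & K(\mathcal M) & \longrightarrow & K(\mathcal M)/U(K\mathcal M)\end{array}$$ (commutative diagram with vertical isomorphisms and middle map the identity), where the bottom row consists of the inclusion and the quotient map. Moreover, writing $\mathrm{Pic}[\mathcal M]=K(\mathrm{Pic}(\mathcal M))$ and $\mathrm{Pure}[\mathcal M]=K(P(\mathcal M))$, the short exact sequence $\mathrm{Pic}[\mathcal M]\to K(\mathcal M)\to\mathrm{Pure}[\mathcal M]$ is a homotopy invariant of $\mathcal M$: any symmetric monoidal equivalence $\mathcal M\simeq\mathcal N$ induces an isomorphism between the corresponding exact sequences of $\mathcal M$ and $\mathcal N$.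
   Context: For a small symmetric monoidal category $\mathcal M$, $K(\mathcal M)$ is the commutative monoid of isomorphism classes $\langle X\rangle$ of objects of $\mathcal M$ with $\langle X\rangle\langle Y\rangle=\langle X\otimes Y\rangle$ and unit $\langle I\rangle$; $K$ is a functor on symmetric (strong) monoidal functors. An object $A$ is weakly invertible if $A\otimes B\cong B\otimes A\cong I$ for some $B$; $\mathrm{Pic}(\mathcal M)$ is the subcategory of weakly invertible objects and isomorphisms, and $\iota_{\mathcal M}$ its inclusion. $P(\mathcal M)$ is the symmetric monoidal category with the same objects as $\mathcal M$, morphisms $X\to Y$ the classes $[A,f]$ of pairs with $A$ weakly invertible and $f\colon X\to Y\otimes A$, where $(A,f)\sim(A',f')$ iff there is an isomorphism $\alpha\colon A\to A'$ with $(Y\otimes\alpha)f=f'$; composition $[B,g]\circ[A,f]=[B\otimes A,\ a_{Z,B,A}(g\otimes A)f]$, identities $[I,r_X^{-1}]$, tensor on objects as in $\mathcal M$, tensor of $[A,f]$ and $[A',f']$ equal to $[A\otimes A',g]$ with $g$ being $f\otimes f'$ followed by the canonical reassociation using the symmetry $b_{A,Y'}$ into $(Y\otimes Y')\otimes(A\otimes A')$, and structure isomorphisms the images under $\pi_{\mathcal M}$; $\pi_{\mathcal M}\colon\mathcal M\to P(\mathcal M)$ is identity on objects and $f\colon X\to Y$ goes to $[I,r_Y^{-1}f]$. For a commutative monoid $M$, $U(M)$ is the group of invertible elements, and $M/U(M)$ is the quotient of $M$ by the congruence $x\sim y\iff x=uy$ for some $u\in U(M)$; the sequence $U(M)\hookrightarrow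 M\to M/U(M)$ is the exact sequence of $M$ in the torsion theory on commutative monoids whose torsion objects are abelian groups and torsion-free objects are monoids whose only invertible element is the unit. *)

theory Defs
  imports "HOL-Algebra.Group"
begin

text \<open>A small category with a tensor structure: objects and morphisms are sets,
 src/tgt are domain and codomain, cmp g f is the composite g after f.
 sasc X Y Z : (X*Y)*Z -> X*(Y*Z), slun X : I*X -> X, srun X : X*I -> X,
 sbrd X Y : X*Y -> Y*X.\<close>

record ('o, 'm) smcat =
  ob :: "'o set"
  mor :: "'m set"
  src :: "'m \<Rightarrow> 'o"
  tgt :: "'m \<Rightarrow> 'o"
  cmp :: "'m \<Rightarrow> 'm \<Rightarrow> 'm"
  ident :: "'o \<Rightarrow> 'm"
  otens :: "'o \<Rightarrow> 'o \<Rightarrow> 'o"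
  mtens :: "'m \<Rightarrow> 'm \<Rightarrow> 'm"
  unitob :: "'o"
  sasc :: "'o \<Rightarrow> 'o \<Rightarrow> 'o \<Rightarrow> 'm"
  slun :: "'o \<Rightarrow> 'm"
  srun :: "'o \<Rightarrow> 'm"
  sbrd :: "'o \<Rightarrow> 'o \<Rightarrow> 'm"

definition hom_in :: "('o,'m,'z) smcat_scheme \<Rightarrow> 'm \<Rightarrow> 'o \<Rightarrow> 'o \<Rightarrow> bool" where
  "hom_in C f X Y \<longleftrightarrow> f \<in> mor C \<and> src C f = X \<and> tgt C f = Y"

definition iso_in :: "('o,'m,'z) smcat_scheme \<Rightarrow> 'm \<Rightarrow> bool" where
  "iso_in C f \<longleftrightarrow> f \<in> mor C \<and> (\<exists>g \<in> mor C. src C g = tgt C f \<and> tgt C g = src C f \<and>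
      cmp C g f = ident C (src C f) \<and> cmp C f g = ident C (tgt C f))"

definition inv_in :: "('o,'m,'z) smcat_scheme \<Rightarrow> 'm \<Rightarrow> 'm" where
  "inv_in C f = (SOME g. g \<in> mor C \<and> src C g = tgt C f \<and> tgt C g = src C f \<and>
      cmp C g f = ident C (src C f) \<and> cmp C f g = ident C (tgt C f))"

definition isomorphic :: "('o,'m,'z) smcat_scheme \<Rightarrow> 'o \<Rightarrow> 'o \<Rightarrow> bool" where
  "isomorphic C X Y \<longleftrightarrow> (\<exists>f. hom_in C f X Y \<and> iso_in C f)"

definition is_category :: "('o,'m,'z) smcat_scheme \<Rightarrow> bool" where
  "is_category C \<longleftrightarrow>
     (\<forall>f \<in> mor C. src C f \<in> ob C \<and> tgt C f \<in> ob C) \<and>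
     (\<forall>X \<in> ob C. hom_in C (ident C X) X X) \<and>
     (\<forall>f \<in> mor C. \<forall>g \<in> mor C. tgt C f = src C g \<longrightarrow> hom_in C (cmp C g f) (src C f) (tgt C g)) \<and>
     (\<forall>f \<in> mor C. cmp C (ident C (tgt C f)) f = f \<and> cmp C f (ident C (src C f)) = f) \<and>
     (\<forall>f \<in> mor C. \<forall>g \<in> mor C. \<forall>h \<in> mor C. tgt C f = src C g \<and> tgt C g = src C h \<longrightarrow>
        cmp C h (cmp C g f) = cmp C (cmp C h g) f)"

definition sym_mon_cat :: "('o,'m,'z) smcat_scheme \<Rightarrow> bool" where
  "sym_mon_cat C \<longleftrightarrow> is_category C \<and>
   \<comment> \<open>tensor bifunctor\<close>
   unitob C \<in> ob C \<and>
   (\<forall>X \<in> ob C. \<forall>Y \<in> ob C. otens C X Y \<in> ob C) \<and>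
   (\<forall>f \<in> mor C. \<forall>g \<in> mor C. hom_in C (mtens C f g) (otens C (src C f) (src C g)) (otens C (tgt C f) (tgt C g))) \<and>
   (\<forall>X \<in> ob C. \<forall>Y \<in> ob C. mtens C (ident C X) (ident C Y) = ident C (otens C X Y)) \<and>
   (\<forall>f \<in> mor C. \<forall>g \<in> mor C. \<forall>f' \<in> mor C. \<forall>g' \<in> mor C. tgt C f = src C g \<and> tgt C f' = src C g' \<longrightarrow>
      mtens C (cmp C g f) (cmp C g' f') = cmp C (mtens C g g') (mtens C f f')) \<and>
   \<comment> \<open>structure isomorphisms\<close>
   (\<forall>X \<in> ob C. \<forall>Y \<in> ob C. \<forall>Z \<in> ob C.
      hom_in C (sasc C X Y Z) (otens C (otens C X Y) Z) (otens C X (otens C Y Z)) \<and> iso_in C (sasc C X Y Z)) \<and>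
   (\<forall>X \<in> ob C. hom_in C (slun C X) (otens C (unitob C) X) X \<and> iso_in C (slun C X)) \<and>
   (\<forall>X \<in> ob C. hom_in C (srun C X) (otens C X (unitob C)) X \<and> iso_in C (srun C X)) \<and>
   (\<forall>X \<in> ob C. \<forall>Y \<in> ob C. hom_in C (sbrd C X Y) (otens C X Y) (otens C Y X) \<and> iso_in C (sbrd C X Y)) \<and>
   \<comment> \<open>naturality\<close>
   (\<forall>f \<in> mor C. \<forall>g \<in> mor C. \<forall>h \<in> mor C.
      cmp C (sasc C (tgt C f) (tgt C g) (tgt C h)) (mtens C (mtens C f g) h)
      = cmp C (mtens C f (mtens C g h)) (sasc C (src C f) (src C g) (src C h))) \<and>
   (\<forall>f \<in> mor C. cmp C (slun C (tgt C f)) (mtens C (ident C (unitob C)) f) = cmp C f (slun C (src C f))) \<and>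
   (\<forall>f \<in> mor C. cmp C (srun C (tgt C f)) (mtens C f (ident C (unitob C))) = cmp C f (srun C (src C f))) \<and>
   (\<forall>f \<in> mor C. \<forall>g \<in> mor C.
      cmp C (sbrd C (tgt C f) (tgt C g)) (mtens C f g) = cmp C (mtens C g f) (sbrd C (src C f) (src C g))) \<and>
   \<comment> \<open>pentagon\<close>
   (\<forall>W \<in> ob C. \<forall>X \<in> ob C. \<forall>Y \<in> ob C. \<forall>Z \<in> ob C.
      cmp C (sasc C W X (otens C Y Z)) (sasc C (otens C W X) Y Z)
      = cmp C (mtens C (ident C W) (sasc C X Y Z))
          (cmp C (sasc C W (otens C X Y) Z) (mtens C (sasc C W X Y) (ident C Z)))) \<and>
   \<comment> \<open>triangle\<close>
   (\<forall>X \<in> ob C. \<forall>Y \<in> ob C.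
      cmp C (mtens C (ident C X) (slun C Y)) (sasc C X (unitob C) Y) = mtens C (srun C X) (ident C Y)) \<and>
   \<comment> \<open>hexagon\<close>
   (\<forall>X \<in> ob C. \<forall>Y \<in> ob C. \<forall>Z \<in> ob C.
      cmp C (sasc C Y Z X) (cmp C (sbrd C X (otens C Y Z)) (sasc C X Y Z))
      = cmp C (mtens C (ident C Y) (sbrd C X Z))
          (cmp C (sasc C Y X Z) (mtens C (sbrd C X Y) (ident C Z)))) \<and>
   \<comment> \<open>symmetry\<close>
   (\<forall>X \<in> ob C. \<forall>Y \<in> ob C. cmp C (sbrd C Y X) (sbrd C X Y) = ident C (otens C X Y))"

record ('o, 'm, 'p, 'n) smfun =
  fob :: "'o \<Rightarrow> 'p"
  fmor :: "'m \<Rightarrow> 'n"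
  fphi0 :: "'n"
  fphi2 :: "'o \<Rightarrow> 'o \<Rightarrow> 'n"

definition sym_mon_functor ::
  "('o,'m) smcat \<Rightarrow> ('p,'n) smcat \<Rightarrow> ('o,'m,'p,'n) smfun \<Rightarrow> bool" where
  "sym_mon_functor C D F \<longleftrightarrow>
   (\<forall>X \<in> ob C. fob F X \<in> ob D) \<and>
   (\<forall>f \<in> mor C. hom_in D (fmor F f) (fob F (src C f)) (fob F (tgt C f))) \<and>
   (\<forall>X \<in> ob C. fmor F (ident C X) = ident D (fob F X)) \<and>
   (\<forall>f \<in> mor C. \<forall>g \<in> mor C. tgt C f = src C g \<longrightarrow> fmor F (cmp C g f) = cmp D (fmor F g) (fmor F f)) \<and>
   hom_in D (fphi0 F) (unitob D) (fob F (unitob C)) \<and> iso_in D (fphi0 F) \<and>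
   (\<forall>X \<in> ob C. \<forall>Y \<in> ob C. hom_in D (fphi2 F X Y) (otens D (fob F X) (fob F Y)) (fob F (otens C X Y))
       \<and> iso_in D (fphi2 F X Y)) \<and>
   (\<forall>f \<in> mor C. \<forall>g \<in> mor C.
      cmp D (fmor F (mtens C f g)) (fphi2 F (src C f) (src C g))
      = cmp D (fphi2 F (tgt C f) (tgt C g)) (mtens D (fmor F f) (fmor F g))) \<and>
   (\<forall>X \<in> ob C. \<forall>Y \<in> ob C. \<forall>Z \<in> ob C.
      cmp D (fmor F (sasc C X Y Z))
        (cmp D (fphi2 F (otens C X Y) Z) (mtens D (fphi2 F X Y) (ident D (fob F Z))))
      = cmp D (fphi2 F X (otens C Y Z))
        (cmp D (mtens D (ident D (fob F X)) (fphi2 F Y Z)) (sasc D (fob F X) (fob F Y) (fob F Z)))) \<and>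
   (\<forall>X \<in> ob C.
      cmp D (fmor F (slun C X)) (cmp D (fphi2 F (unitob C) X) (mtens D (fphi0 F) (ident D (fob F X))))
      = slun D (fob F X)) \<and>
   (\<forall>X \<in> ob C.
      cmp D (fmor F (srun C X)) (cmp D (fphi2 F X (unitob C)) (mtens D (ident D (fob F X)) (fphi0 F)))
      = srun D (fob F X)) \<and>
   (\<forall>X \<in> ob C. \<forall>Y \<in> ob C.
      cmp D (fmor F (sbrd C X Y)) (fphi2 F X Y) = cmp D (fphi2 F Y X) (sbrd D (fob F X) (fob F Y)))"

definition sym_mon_equiv ::
  "('o,'m) smcat \<Rightarrow> ('p,'n) smcat \<Rightarrow> ('o,'m,'p,'n) smfun \<Rightarrow> bool" where
  "sym_mon_equiv C D F \<longleftrightarrow> sym_mon_functor C D F \<and>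
   (\<forall>X \<in> ob C. \<forall>Y \<in> ob C. \<forall>g. hom_in D g (fob F X) (fob F Y) \<longrightarrow> (\<exists>f. hom_in C f X Y \<and> fmor F f = g)) \<and>
   (\<forall>X \<in> ob C. \<forall>Y \<in> ob C. \<forall>f f'. hom_in C f X Y \<and> hom_in C f' X Y \<and> fmor F f = fmor F f' \<longrightarrow> f = f') \<and>
   (\<forall>Y \<in> ob D. \<exists>X \<in> ob C. isomorphic D (fob F X) Y)"

definition iso_class :: "('o,'m,'z) smcat_scheme \<Rightarrow> 'o \<Rightarrow> 'o set" where
  "iso_class C X = {Y \<in> ob C. isomorphic C X Y}"

definition Kmon :: "('o,'m,'z) smcat_scheme \<Rightarrow> 'o set monoid" where
  "Kmon C = \<lparr> carrier = iso_class C ` ob C,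
              mult = (\<lambda>a b. iso_class C (otens C (SOME x. x \<in> a) (SOME y. y \<in> b))),
              one = iso_class C (unitob C) \<rparr>"

definition Kmap :: "('o,'m,'z) smcat_scheme \<Rightarrow> ('p,'n,'y) smcat_scheme \<Rightarrow> ('o \<Rightarrow> 'p) \<Rightarrow> 'o set \<Rightarrow> 'p set" where
  "Kmap C D Fo a = iso_class D (Fo (SOME x. x \<in> a))"

definition weakly_invertible :: "('o,'m,'z) smcat_scheme \<Rightarrow> 'o \<Rightarrow> bool" where
  "weakly_invertible C A \<longleftrightarrow> A \<in> ob C \<and>
     (\<exists>B \<in> ob C. isomorphic C (otens C A B) (unitob C) \<and> isomorphic C (otens C B A) (unitob C))"

definition PicCat :: "('o,'m) smcat \<Rightarrow> ('o,'m) smcat" where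
  "PicCat C = C\<lparr> ob := {A. weakly_invertible C A},
                 mor := {f \<in> mor C. iso_in C f \<and> weakly_invertible C (src C f) \<and> weakly_invertible C (tgt C f)} \<rparr>"

text \<open>The class [A,f] of a pair (A,f) with f : X -> Y * A.\<close>

definition Pcls :: "('o,'m) smcat \<Rightarrow> 'o \<Rightarrow> 'o \<Rightarrow> 'o \<Rightarrow> 'm \<Rightarrow> ('o \<times> 'm) set" where
  "Pcls C X Y A f = {(A', f'). weakly_invertible C A' \<and> hom_in C f' X (otens C Y A') \<and>
      (\<exists>\<alpha>. hom_in C \<alpha> A A' \<and> iso_in C \<alpha> \<and> cmp C (mtens C (ident C Y) \<alpha>) f = f')}"

definition Pmor :: "('o,'m) smcat \<Rightarrow> ('o \<times> 'o \<times> ('o \<times> 'm) set) set" where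
  "Pmor C = {(X, Y, Pcls C X Y A f) | X Y A f. X \<in> ob C \<and> Y \<in> ob C \<and> weakly_invertible C A \<and>
      hom_in C f X (otens C Y A)}"

definition rep :: "'a set \<Rightarrow> 'a" where
  "rep c = (SOME p. p \<in> c)"

definition Pcmp :: "('o,'m) smcat \<Rightarrow> ('o \<times> 'o \<times> ('o \<times> 'm) set) \<Rightarrow> ('o \<times> 'o \<times> ('o \<times> 'm) set)
    \<Rightarrow> ('o \<times> 'o \<times> ('o \<times> 'm) set)" where
  "Pcmp C q p =
    (let X = fst p; A = fst (rep (snd (snd p))); f = snd (rep (snd (snd p)));
         Z = fst (snd q); B = fst (rep (snd (snd q))); g = snd (rep (snd (snd q)))
     in (X, Z, Pcls C X Z (otens C B A) (cmp C (sasc C Z B A) (cmp C (mtens C g (ident C A)) f))))"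

definition Pid :: "('o,'m) smcat \<Rightarrow> 'o \<Rightarrow> ('o \<times> 'o \<times> ('o \<times> 'm) set)" where
  "Pid C X = (X, X, Pcls C X X (unitob C) (inv_in C (srun C X)))"

text \<open>Canonical reassociation (Y*A)*(Y'*A') -> (Y*Y')*(A*A') using the symmetry b_{A,Y'}.\<close>

definition reassoc :: "('o,'m) smcat \<Rightarrow> 'o \<Rightarrow> 'o \<Rightarrow> 'o \<Rightarrow> 'o \<Rightarrow> 'm" where
  "reassoc C Y A Y' A' =
     cmp C (inv_in C (sasc C Y Y' (otens C A A')))
    (cmp C (mtens C (ident C Y) (sasc C Y' A A'))
    (cmp C (mtens C (ident C Y) (mtens C (sbrd C A Y') (ident C A')))
    (cmp C (mtens C (ident C Y) (inv_in C (sasc C A Y' A')))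
           (sasc C Y A (otens C Y' A')))))"

definition Ptens :: "('o,'m) smcat \<Rightarrow> ('o \<times> 'o \<times> ('o \<times> 'm) set) \<Rightarrow> ('o \<times> 'o \<times> ('o \<times> 'm) set)
    \<Rightarrow> ('o \<times> 'o \<times> ('o \<times> 'm) set)" where
  "Ptens C p p' =
    (let X = fst p; Y = fst (snd p); A = fst (rep (snd (snd p))); f = snd (rep (snd (snd p)));
         X' = fst p'; Y' = fst (snd p'); A' = fst (rep (snd (snd p'))); f' = snd (rep (snd (snd p')))
     in (otens C X X', otens C Y Y',
         Pcls C (otens C X X') (otens C Y Y') (otens C A A') (cmp C (reassoc C Y A Y' A') (mtens C f f'))))"

definition Ppi :: "('o,'m) smcat \<Rightarrow> 'm \<Rightarrow> ('o \<times> 'o \<times> ('o \<times> 'm) set)" where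
  "Ppi C f = (src C f, tgt C f,
      Pcls C (src C f) (tgt C f) (unitob C) (cmp C (inv_in C (srun C (tgt C f))) f))"

definition PCat :: "('o,'m) smcat \<Rightarrow> ('o, 'o \<times> 'o \<times> ('o \<times> 'm) set) smcat" where
  "PCat C = \<lparr> ob = ob C, mor = Pmor C, src = fst, tgt = (\<lambda>p. fst (snd p)),
     cmp = Pcmp C, ident = Pid C, otens = otens C, mtens = Ptens C, unitob = unitob C,
     sasc = (\<lambda>X Y Z. Ppi C (sasc C X Y Z)), slun = (\<lambda>X. Ppi C (slun C X)),
     srun = (\<lambda>X. Ppi C (srun C X)), sbrd = (\<lambda>X Y. Ppi C (sbrd C X Y)) \<rparr>"

definition Ucls :: "('a,'b) monoid_scheme \<Rightarrow> 'a \<Rightarrow> 'a set" where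
  "Ucls G x = {y \<in> carrier G. \<exists>u \<in> Units G. y = u \<otimes>\<^bsub>G\<^esub> x}"

definition Umod :: "('a,'b) monoid_scheme \<Rightarrow> 'a set monoid" where
  "Umod G = \<lparr> carrier = Ucls G ` carrier G,
              mult = (\<lambda>a b. Ucls G ((SOME x. x \<in> a) \<otimes>\<^bsub>G\<^esub> (SOME y. y \<in> b))),
              one = Ucls G \<one>\<^bsub>G\<^esub> \<rparr>"

end

(*
  The units of K(M) are exactly the classes of weakly invertible objects, which gives the left
  isomorphism.  For the right one, the point is that X and Y are isomorphic in P(M) iff
  X \<cong> Y \<otimes> A in M for some weakly invertible A, i.e. iff their classes differ by a unit of
  K(M).  This rests on: [A, f] : X \<rightarrow> Y is invertible in P(M) iff f is invertible in M.
  If [B, g] is an inverse, then \<rho> \<circ> (X \<otimes> \<alpha>) \<circ> a \<circ> (g \<otimes> A) is a left inverse k of f with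
  f \<circ> k invertible.  Conversely, for invertible f an inverse [B, g] can be written down; checking
  it needs an isomorphism B \<otimes> A \<cong> I satisfying the zigzag identity with a given A \<otimes> B \<cong> I,
  which exists because tensoring with a weakly invertible object is fully faithful.
  Homotopy invariance: a symmetric monoidal equivalence preserves and reflects isomorphism,
  tensor products and weak invertibility, so it induces bijections of all three monoids.
*)

theory Submission
  imports Defs
begin

section \<open>Monoids of isomorphism classes\<close>

text \<open>Properties of isomorphism in \<open>C\<close> ensuring that the representatives chosen in the
  definitions of \<^const>\<open>Kmon\<close> and \<^const>\<open>Kmap\<close> do not matter.\<close>

locale iso_congruence =
  fixes C :: "('o,'m,'z) smcat_scheme"
  assumes isomorphic_ob: "isomorphic C X Y \<Longrightarrow> X \<in> ob C \<and> Y \<in> ob C"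
    and isomorphic_refl: "X \<in> ob C \<Longrightarrow> isomorphic C X X"
    and isomorphic_sym: "isomorphic C X Y \<Longrightarrow> isomorphic C Y X"
    and isomorphic_trans: "isomorphic C X Y \<Longrightarrow> isomorphic C Y Z \<Longrightarrow> isomorphic C X Z"
    and otens_ob: "X \<in> ob C \<Longrightarrow> Y \<in> ob C \<Longrightarrow> otens C X Y \<in> ob C"
    and isomorphic_otens:
      "isomorphic C X X' \<Longrightarrow> isomorphic C Y Y' \<Longrightarrow> isomorphic C (otens C X Y) (otens C X' Y')"
begin

lemma iso_class_eqI: assumes "isomorphic C X Y" shows "iso_class C X = iso_class C Y"
  unfolding iso_class_def using assms isomorphic_sym isomorphic_trans by blast

lemma iso_class_eq_iff: "X \<in> ob C \<Longrightarrow> iso_class C X = iso_class C Y \<longleftrightarrow> isomorphic C X Y"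
  unfolding iso_class_def using isomorphic_refl isomorphic_sym isomorphic_trans by blast

lemma some_in_iso_class:
  assumes "X \<in> ob C"
  shows "(SOME Y. Y \<in> iso_class C X) \<in> ob C" "isomorphic C X (SOME Y. Y \<in> iso_class C X)"
proof -
  have "X \<in> iso_class C X" unfolding iso_class_def using assms isomorphic_refl by blast
  then have "(SOME Y. Y \<in> iso_class C X) \<in> iso_class C X" by (rule someI)
  then show "(SOME Y. Y \<in> iso_class C X) \<in> ob C" "isomorphic C X (SOME Y. Y \<in> iso_class C X)"
    unfolding iso_class_def by auto
qed

lemma Kmon_carrier: "carrier (Kmon C) = iso_class C ` ob C"
  unfolding Kmon_def by simp

lemma Kmon_one: "one (Kmon C) = iso_class C (unitob C)"
  unfolding Kmon_def by simp

lemma Kmon_mult: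
  assumes "X \<in> ob C" "Y \<in> ob C"
  shows "iso_class C X \<otimes>\<^bsub>Kmon C\<^esub> iso_class C Y = iso_class C (otens C X Y)"
proof -
  have "iso_class C X \<otimes>\<^bsub>Kmon C\<^esub> iso_class C Y =
      iso_class C (otens C (SOME Z. Z \<in> iso_class C X) (SOME Z. Z \<in> iso_class C Y))"
    unfolding Kmon_def by simp
  also have "\<dots> = iso_class C (otens C X Y)"
    using assms by (intro iso_class_eqI isomorphic_otens[THEN isomorphic_sym] some_in_iso_class)
  finally show ?thesis .
qed

end

lemma Kmap_iso_class:
  assumes "iso_congruence C" "iso_congruence D"
    and resp: "\<And>X Y. isomorphic C X Y \<Longrightarrow> isomorphic D (Fo X) (Fo Y)" and X: "X \<in> ob C"
  shows "Kmap C D Fo (iso_class C X) = iso_class D (Fo X)"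
proof -
  interpret C: iso_congruence C by fact
  interpret D: iso_congruence D by fact
  show ?thesis
    unfolding Kmap_def using X by (intro D.iso_class_eqI resp C.some_in_iso_class(2)[THEN C.isomorphic_sym])
qed

lemma Kmap_Kmap:
  assumes C: "iso_congruence C" and D: "iso_congruence D" and E: "iso_congruence E"
    and F: "\<And>X Y. isomorphic C X Y \<Longrightarrow> isomorphic D (Fo X) (Fo Y)"
    and G: "\<And>X Y. isomorphic D X Y \<Longrightarrow> isomorphic E (Go X) (Go Y)"
    and x: "x \<in> carrier (Kmon C)"
  shows "Kmap D E Go (Kmap C D Fo x) = Kmap C E (Go \<circ> Fo) x"
proof -
  interpret C: iso_congruence C by fact
  interpret D: iso_congruence D by fact
  obtain X where X: "X \<in> ob C" "x = iso_class C X" using x unfolding C.Kmon_carrier by blast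
  have "Fo X \<in> ob D" using D.isomorphic_ob[OF F[OF C.isomorphic_refl[OF X(1)]]] by blast
  then show ?thesis
    unfolding X(2) using X(1) F G
    by (simp add: Kmap_iso_class[OF C D] Kmap_iso_class[OF D E] Kmap_iso_class[OF C E])
qed

lemma Kmap_hom:
  assumes C: "iso_congruence C" and D: "iso_congruence D"
    and preserves: "\<And>X Y. isomorphic C X Y \<Longrightarrow> isomorphic D (Fo X) (Fo Y)"
    and otens: "\<And>X Y. X \<in> ob C \<Longrightarrow> Y \<in> ob C \<Longrightarrow> isomorphic D (Fo (otens C X Y)) (otens D (Fo X) (Fo Y))"
    and into: "\<And>X. X \<in> ob C \<Longrightarrow> Fo X \<in> S" and S: "S \<subseteq> ob D"
    and H: "carrier H = iso_class D ` S" "mult H = mult (Kmon D)"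
  shows "Kmap C D Fo \<in> hom (Kmon C) H"
proof -
  interpret C: iso_congruence C by fact
  interpret D: iso_congruence D by fact
  have K: "Kmap C D Fo (iso_class C X) = iso_class D (Fo X)" if "X \<in> ob C" for X
    using Kmap_iso_class[OF C D preserves that] .
  show ?thesis
  proof (rule homI)
    fix x assume "x \<in> carrier (Kmon C)"
    then obtain X where "X \<in> ob C" "x = iso_class C X" unfolding C.Kmon_carrier by blast
    then show "Kmap C D Fo x \<in> carrier H" unfolding H(1) using K into by simp
  next
    fix x y assume "x \<in> carrier (Kmon C)" "y \<in> carrier (Kmon C)"
    then obtain X Y where XY: "X \<in> ob C" "Y \<in> ob C" "x = iso_class C X" "y = iso_class C Y"
      unfolding C.Kmon_carrier by blast
    have "Kmap C D Fo (x \<otimes>\<^bsub>Kmon C\<^esub> y) = iso_class D (Fo (otens C X Y))"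
      using XY by (simp add: C.Kmon_mult C.otens_ob K)
    also have "\<dots> = iso_class D (otens D (Fo X) (Fo Y))"
      using XY by (intro D.iso_class_eqI otens)
    also have "\<dots> = Kmap C D Fo x \<otimes>\<^bsub>H\<^esub> Kmap C D Fo y"
      using XY S into by (simp add: H(2) K subset_iff D.Kmon_mult)
    finally show "Kmap C D Fo (x \<otimes>\<^bsub>Kmon C\<^esub> y) = Kmap C D Fo x \<otimes>\<^bsub>H\<^esub> Kmap C D Fo y" .
  qed
qed

lemma Kmap_iso:
  assumes C: "iso_congruence C" and D: "iso_congruence D"
    and preserves: "\<And>X Y. isomorphic C X Y \<Longrightarrow> isomorphic D (Fo X) (Fo Y)"
    and reflects: "\<And>X Y. X \<in> ob C \<Longrightarrow> Y \<in> ob C \<Longrightarrow> isomorphic D (Fo X) (Fo Y) \<Longrightarrow> isomorphic C X Y"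
    and otens: "\<And>X Y. X \<in> ob C \<Longrightarrow> Y \<in> ob C \<Longrightarrow> isomorphic D (Fo (otens C X Y)) (otens D (Fo X) (Fo Y))"
    and into: "\<And>X. X \<in> ob C \<Longrightarrow> Fo X \<in> S" and S: "S \<subseteq> ob D"
    and onto: "\<And>Y. Y \<in> S \<Longrightarrow> \<exists>X \<in> ob C. isomorphic D (Fo X) Y"
    and H: "carrier H = iso_class D ` S" "mult H = mult (Kmon D)"
  shows "Kmap C D Fo \<in> iso (Kmon C) H"
proof -
  interpret C: iso_congruence C by fact
  interpret D: iso_congruence D by fact
  have K: "Kmap C D Fo (iso_class C X) = iso_class D (Fo X)" if "X \<in> ob C" for X
    using Kmap_iso_class[OF C D preserves that] .
  have "inj_on (Kmap C D Fo) (carrier (Kmon C))"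
  proof (rule inj_onI)
    fix x y assume "x \<in> carrier (Kmon C)" "y \<in> carrier (Kmon C)" "Kmap C D Fo x = Kmap C D Fo y"
    then obtain X Y where XY: "X \<in> ob C" "Y \<in> ob C" "x = iso_class C X" "y = iso_class C Y"
      and "iso_class D (Fo X) = iso_class D (Fo Y)"
      unfolding C.Kmon_carrier using K by auto
    then have "isomorphic D (Fo X) (Fo Y)" using D.iso_class_eq_iff S into by blast
    then show "x = y" unfolding XY(3,4) by (intro C.iso_class_eqI reflects XY(1,2))
  qed
  moreover have "Kmap C D Fo ` carrier (Kmon C) = carrier H"
  proof
    show "Kmap C D Fo ` carrier (Kmon C) \<subseteq> carrier H"
      unfolding C.Kmon_carrier H(1) using K into by auto
    show "carrier H \<subseteq> Kmap C D Fo ` carrier (Kmon C)"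
    proof
      fix y assume "y \<in> carrier H"
      then obtain Y where Y: "Y \<in> S" "y = iso_class D Y" unfolding H(1) by blast
      then obtain X where X: "X \<in> ob C" "isomorphic D (Fo X) Y" using onto by blast
      then have "y = Kmap C D Fo (iso_class C X)" using Y K D.iso_class_eqI by simp
      then show "y \<in> Kmap C D Fo ` carrier (Kmon C)" unfolding C.Kmon_carrier using X(1) by blast
    qed
  qed
  ultimately show ?thesis
    using Kmap_hom[OF C D preserves otens into S H] unfolding iso_def bij_betw_def by blast
qed

section \<open>Symmetric monoidal categories\<close>

locale symmetric_monoidal =
  fixes M :: "('o,'m) smcat"
  assumes sym_mon_cat: "sym_mon_cat M"
begin

abbreviation mcomp (infixr "\<bullet>" 55) where "g \<bullet> f \<equiv> cmp M g f"
abbreviation mtensor (infixl "\<diamond>" 65) where "f \<diamond> g \<equiv> mtens M f g"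
abbreviation otensor (infixl "\<odot>" 65) where "X \<odot> Y \<equiv> otens M X Y"
abbreviation idm where "idm X \<equiv> ident M X"
abbreviation iv where "iv f \<equiv> inv_in M f"
abbreviation I where "I \<equiv> unitob M"
abbreviation asc where "asc \<equiv> sasc M"
abbreviation lu where "lu \<equiv> slun M"
abbreviation ru where "ru \<equiv> srun M"
abbreviation br where "br \<equiv> sbrd M"
abbreviation is_iso where "is_iso f \<equiv> iso_in M f"

lemma is_category: "is_category M"
  using sym_mon_cat unfolding sym_mon_cat_def by blast

lemma src_ob[simp]: "f \<in> mor M \<Longrightarrow> src M f \<in> ob M"
  and tgt_ob[simp]: "f \<in> mor M \<Longrightarrow> tgt M f \<in> ob M"
  using is_category unfolding is_category_def hom_in_def by simp_all

lemma unit_ob[simp]: "I \<in> ob M"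
  using sym_mon_cat unfolding sym_mon_cat_def by simp

lemma otens_ob[simp]: "X \<in> ob M \<Longrightarrow> Y \<in> ob M \<Longrightarrow> X \<odot> Y \<in> ob M"
  using sym_mon_cat unfolding sym_mon_cat_def by simp

lemma ident_mor[simp]: "X \<in> ob M \<Longrightarrow> idm X \<in> mor M"
  "X \<in> ob M \<Longrightarrow> src M (idm X) = X" "X \<in> ob M \<Longrightarrow> tgt M (idm X) = X"
  using is_category unfolding is_category_def hom_in_def by simp_all

lemma cmp_mor[simp]: "f \<in> mor M \<Longrightarrow> g \<in> mor M \<Longrightarrow> tgt M f = src M g \<Longrightarrow> g \<bullet> f \<in> mor M"
  "f \<in> mor M \<Longrightarrow> g \<in> mor M \<Longrightarrow> tgt M f = src M g \<Longrightarrow> src M (g \<bullet> f) = src M f"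
  "f \<in> mor M \<Longrightarrow> g \<in> mor M \<Longrightarrow> tgt M f = src M g \<Longrightarrow> tgt M (g \<bullet> f) = tgt M g"
  using is_category unfolding is_category_def hom_in_def by simp_all

lemma ident_left[simp]: "f \<in> mor M \<Longrightarrow> tgt M f = Y \<Longrightarrow> idm Y \<bullet> f = f"
  and ident_right[simp]: "f \<in> mor M \<Longrightarrow> src M f = X \<Longrightarrow> f \<bullet> idm X = f"
  using is_category unfolding is_category_def by auto

text \<open>Composites are normalised to right-nested form by the simplifier; the side conditions on
  sources and targets are discharged by the typing rules declared \<open>simp\<close> here.\<close>

lemma cmp_assoc[simp]: "f \<in> mor M \<Longrightarrow> g \<in> mor M \<Longrightarrow> h \<in> mor M \<Longrightarrow>
    tgt M f = src M g \<Longrightarrow> tgt M g = src M h \<Longrightarrow> (h \<bullet> g) \<bullet> f = h \<bullet> (g \<bullet> f)"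
  using is_category unfolding is_category_def by simp

lemma mtens_mor[simp]: "f \<in> mor M \<Longrightarrow> g \<in> mor M \<Longrightarrow> f \<diamond> g \<in> mor M"
  "f \<in> mor M \<Longrightarrow> g \<in> mor M \<Longrightarrow> src M (f \<diamond> g) = src M f \<odot> src M g"
  "f \<in> mor M \<Longrightarrow> g \<in> mor M \<Longrightarrow> tgt M (f \<diamond> g) = tgt M f \<odot> tgt M g"
  using sym_mon_cat unfolding sym_mon_cat_def hom_in_def by simp_all

lemma mtens_ident[simp]: "X \<in> ob M \<Longrightarrow> Y \<in> ob M \<Longrightarrow> idm X \<diamond> idm Y = idm (X \<odot> Y)"
  using sym_mon_cat unfolding sym_mon_cat_def by simp

lemma interchange: "f \<in> mor M \<Longrightarrow> g \<in> mor M \<Longrightarrow> f' \<in> mor M \<Longrightarrow> g' \<in> mor M \<Longrightarrow>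
    tgt M f = src M g \<Longrightarrow> tgt M f' = src M g' \<Longrightarrow> (g \<bullet> f) \<diamond> (g' \<bullet> f') = (g \<diamond> g') \<bullet> (f \<diamond> f')"
  using sym_mon_cat unfolding sym_mon_cat_def by simp

lemma asc_mor[simp]: "X \<in> ob M \<Longrightarrow> Y \<in> ob M \<Longrightarrow> Z \<in> ob M \<Longrightarrow> asc X Y Z \<in> mor M"
  "X \<in> ob M \<Longrightarrow> Y \<in> ob M \<Longrightarrow> Z \<in> ob M \<Longrightarrow> src M (asc X Y Z) = X \<odot> Y \<odot> Z"
  "X \<in> ob M \<Longrightarrow> Y \<in> ob M \<Longrightarrow> Z \<in> ob M \<Longrightarrow> tgt M (asc X Y Z) = X \<odot> (Y \<odot> Z)"
  "X \<in> ob M \<Longrightarrow> Y \<in> ob M \<Longrightarrow> Z \<in> ob M \<Longrightarrow> is_iso (asc X Y Z)"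
  using sym_mon_cat unfolding sym_mon_cat_def hom_in_def by simp_all

lemma lu_mor[simp]: "X \<in> ob M \<Longrightarrow> lu X \<in> mor M" "X \<in> ob M \<Longrightarrow> src M (lu X) = I \<odot> X"
  "X \<in> ob M \<Longrightarrow> tgt M (lu X) = X" "X \<in> ob M \<Longrightarrow> is_iso (lu X)"
  using sym_mon_cat unfolding sym_mon_cat_def hom_in_def by simp_all

lemma ru_mor[simp]: "X \<in> ob M \<Longrightarrow> ru X \<in> mor M" "X \<in> ob M \<Longrightarrow> src M (ru X) = X \<odot> I"
  "X \<in> ob M \<Longrightarrow> tgt M (ru X) = X" "X \<in> ob M \<Longrightarrow> is_iso (ru X)"
  using sym_mon_cat unfolding sym_mon_cat_def hom_in_def by simp_all

lemma br_mor[simp]: "X \<in> ob M \<Longrightarrow> Y \<in> ob M \<Longrightarrow> br X Y \<in> mor M"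
  "X \<in> ob M \<Longrightarrow> Y \<in> ob M \<Longrightarrow> src M (br X Y) = X \<odot> Y"
  "X \<in> ob M \<Longrightarrow> Y \<in> ob M \<Longrightarrow> tgt M (br X Y) = Y \<odot> X"
  "X \<in> ob M \<Longrightarrow> Y \<in> ob M \<Longrightarrow> is_iso (br X Y)"
  using sym_mon_cat unfolding sym_mon_cat_def hom_in_def by simp_all

lemma is_iso_mor[simp]: "is_iso f \<Longrightarrow> f \<in> mor M" unfolding iso_in_def by auto

lemma inv_props: assumes "is_iso f"
  shows "iv f \<in> mor M \<and> src M (iv f) = tgt M f \<and> tgt M (iv f) = src M f \<and>
      iv f \<bullet> f = idm (src M f) \<and> f \<bullet> iv f = idm (tgt M f)"
proof -
  from assms obtain g where "g \<in> mor M \<and> src M g = tgt M f \<and> tgt M g = src M f \<and>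
      g \<bullet> f = idm (src M f) \<and> f \<bullet> g = idm (tgt M f)" unfolding iso_in_def by blast
  then show ?thesis unfolding inv_in_def by (rule someI)
qed

lemma inv_mor[simp]: "is_iso f \<Longrightarrow> iv f \<in> mor M"
  "is_iso f \<Longrightarrow> src M (iv f) = tgt M f" "is_iso f \<Longrightarrow> tgt M (iv f) = src M f"
  using inv_props by auto

lemma inv_left[simp]: "is_iso f \<Longrightarrow> src M f = X \<Longrightarrow> iv f \<bullet> f = idm X"
  and inv_right[simp]: "is_iso f \<Longrightarrow> tgt M f = Y \<Longrightarrow> f \<bullet> iv f = idm Y"
  using inv_props by auto

lemma inv_left_cancel[simp]:
  "is_iso f \<Longrightarrow> h \<in> mor M \<Longrightarrow> tgt M h = src M f \<Longrightarrow> iv f \<bullet> (f \<bullet> h) = h"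
proof -
  assume a: "is_iso f" "h \<in> mor M" "tgt M h = src M f"
  have "iv f \<bullet> (f \<bullet> h) = (iv f \<bullet> f) \<bullet> h" using a by (subst cmp_assoc) auto
  also have "\<dots> = h" using a by (simp del: cmp_assoc)
  finally show ?thesis .
qed

lemma inv_right_cancel[simp]:
  "is_iso f \<Longrightarrow> h \<in> mor M \<Longrightarrow> tgt M h = tgt M f \<Longrightarrow> f \<bullet> (iv f \<bullet> h) = h"
proof -
  assume a: "is_iso f" "h \<in> mor M" "tgt M h = tgt M f"
  have "f \<bullet> (iv f \<bullet> h) = (f \<bullet> iv f) \<bullet> h" using a by (subst cmp_assoc) auto
  also have "\<dots> = h" using a by (simp del: cmp_assoc)
  finally show ?thesis .
qed

lemma is_isoI: "f \<in> mor M \<Longrightarrow> g \<in> mor M \<Longrightarrow> src M g = tgt M f \<Longrightarrow> tgt M g = src M f \<Longrightarrow>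
   g \<bullet> f = idm (src M f) \<Longrightarrow> f \<bullet> g = idm (tgt M f) \<Longrightarrow> is_iso f"
  unfolding iso_in_def by blast

lemma inv_unique:
  assumes "is_iso f" "g \<in> mor M" "src M g = tgt M f" "tgt M g = src M f" "g \<bullet> f = idm (src M f)"
  shows "iv f = g"
proof -
  have "g = g \<bullet> (f \<bullet> iv f)" using assms by simp
  also have "\<dots> = (g \<bullet> f) \<bullet> iv f" using assms by (subst cmp_assoc) auto
  also have "\<dots> = iv f" using assms by simp
  finally have "g = iv f" .
  then show ?thesis by (rule sym)
qed

lemma is_iso_inv[simp]: "is_iso f \<Longrightarrow> is_iso (iv f)"
  by (rule is_isoI[of _ f]) auto

lemma is_iso_ident[simp]: "X \<in> ob M \<Longrightarrow> is_iso (idm X)"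
  by (rule is_isoI[of _ "idm X"]) auto

lemma inv_ident[simp]: "X \<in> ob M \<Longrightarrow> iv (idm X) = idm X"
  by (rule inv_unique) auto

lemma is_iso_cmp[simp]: "is_iso f \<Longrightarrow> is_iso g \<Longrightarrow> tgt M f = src M g \<Longrightarrow> is_iso (g \<bullet> f)"
  by (rule is_isoI[of _ "iv f \<bullet> iv g"]) auto

lemma inv_cmp[simp]:
  "is_iso f \<Longrightarrow> is_iso g \<Longrightarrow> tgt M f = src M g \<Longrightarrow> iv (g \<bullet> f) = iv f \<bullet> iv g"
  by (rule inv_unique) auto

lemma is_iso_mtens[simp]: assumes "is_iso f" "is_iso g" shows "is_iso (f \<diamond> g)"
proof (rule is_isoI[of _ "iv f \<diamond> iv g"])
  show "(iv f \<diamond> iv g) \<bullet> (f \<diamond> g) = idm (src M (f \<diamond> g))"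
    using assms by (simp flip: interchange)
  show "(f \<diamond> g) \<bullet> (iv f \<diamond> iv g) = idm (tgt M (f \<diamond> g))"
    using assms by (simp flip: interchange)
qed (use assms in auto)

lemma inv_mtens[simp]: assumes "is_iso f" "is_iso g" shows "iv (f \<diamond> g) = iv f \<diamond> iv g"
  by (rule inv_unique) (use assms in \<open>auto simp flip: interchange\<close>)

lemma assoc_natural: "f \<in> mor M \<Longrightarrow> g \<in> mor M \<Longrightarrow> h \<in> mor M \<Longrightarrow>
    asc (tgt M f) (tgt M g) (tgt M h) \<bullet> (f \<diamond> g \<diamond> h) =
    (f \<diamond> (g \<diamond> h)) \<bullet> asc (src M f) (src M g) (src M h)"
  using sym_mon_cat unfolding sym_mon_cat_def by simp

lemma lunit_natural: "f \<in> mor M \<Longrightarrow> lu (tgt M f) \<bullet> (idm I \<diamond> f) = f \<bullet> lu (src M f)"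
  using sym_mon_cat unfolding sym_mon_cat_def by simp

lemma runit_natural: "f \<in> mor M \<Longrightarrow> ru (tgt M f) \<bullet> (f \<diamond> idm I) = f \<bullet> ru (src M f)"
  using sym_mon_cat unfolding sym_mon_cat_def by simp

lemma pentagon: "W \<in> ob M \<Longrightarrow> X \<in> ob M \<Longrightarrow> Y \<in> ob M \<Longrightarrow> Z \<in> ob M \<Longrightarrow>
    asc W X (Y \<odot> Z) \<bullet> asc (W \<odot> X) Y Z =
    (idm W \<diamond> asc X Y Z) \<bullet> (asc W (X \<odot> Y) Z \<bullet> (asc W X Y \<diamond> idm Z))"
  using sym_mon_cat unfolding sym_mon_cat_def by simp

lemma triangle: "X \<in> ob M \<Longrightarrow> Y \<in> ob M \<Longrightarrow> (idm X \<diamond> lu Y) \<bullet> asc X I Y = ru X \<diamond> idm Y"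
  using sym_mon_cat unfolding sym_mon_cat_def by simp

lemma isomorphic_iff: "isomorphic M X Y \<longleftrightarrow> (\<exists>f. f \<in> mor M \<and> src M f = X \<and> tgt M f = Y \<and> is_iso f)"
  unfolding isomorphic_def hom_in_def by auto

lemma isomorphicI: "is_iso f \<Longrightarrow> src M f = X \<Longrightarrow> tgt M f = Y \<Longrightarrow> isomorphic M X Y"
  unfolding isomorphic_iff using is_iso_mor by blast

lemma isomorphicE: assumes "isomorphic M X Y"
  obtains f where "f \<in> mor M" "src M f = X" "tgt M f = Y" "is_iso f"
  using assms unfolding isomorphic_iff by auto

lemma isomorphic_ob: "isomorphic M X Y \<Longrightarrow> X \<in> ob M" "isomorphic M X Y \<Longrightarrow> Y \<in> ob M"
  by (auto elim!: isomorphicE)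

lemma isomorphic_refl: "X \<in> ob M \<Longrightarrow> isomorphic M X X"
  by (rule isomorphicI[of "idm X"]) auto

lemma isomorphic_sym: assumes "isomorphic M X Y" shows "isomorphic M Y X"
proof -
  obtain f where "f \<in> mor M" "src M f = X" "tgt M f = Y" "is_iso f" using assms by (rule isomorphicE)
  then show ?thesis by (intro isomorphicI[of "iv f"]) auto
qed

lemma isomorphic_trans[trans]: "isomorphic M X Y \<Longrightarrow> isomorphic M Y Z \<Longrightarrow> isomorphic M X Z"
proof -
  assume "isomorphic M X Y" "isomorphic M Y Z"
  then obtain f g where "f \<in> mor M" "src M f = X" "tgt M f = Y" "is_iso f"
     "g \<in> mor M" "src M g = Y" "tgt M g = Z" "is_iso g" by (auto elim!: isomorphicE)
  then show ?thesis by (intro isomorphicI[of "g \<bullet> f"]) auto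
qed

lemma isomorphic_otens: "isomorphic M X X' \<Longrightarrow> isomorphic M Y Y' \<Longrightarrow> isomorphic M (X \<odot> Y) (X' \<odot> Y')"
proof -
  assume "isomorphic M X X'" "isomorphic M Y Y'"
  then obtain f g where "f \<in> mor M" "src M f = X" "tgt M f = X'" "is_iso f"
     "g \<in> mor M" "src M g = Y" "tgt M g = Y'" "is_iso g" by (auto elim!: isomorphicE)
  then show ?thesis by (intro isomorphicI[of "f \<diamond> g"]) auto
qed

lemma isomorphic_assoc:
  "X \<in> ob M \<Longrightarrow> Y \<in> ob M \<Longrightarrow> Z \<in> ob M \<Longrightarrow> isomorphic M (X \<odot> Y \<odot> Z) (X \<odot> (Y \<odot> Z))"
  by (rule isomorphicI[of "asc X Y Z"]) auto

lemma isomorphic_lunit: "X \<in> ob M \<Longrightarrow> isomorphic M (I \<odot> X) X"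
  by (rule isomorphicI[of "lu X"]) auto

lemma isomorphic_runit: "X \<in> ob M \<Longrightarrow> isomorphic M (X \<odot> I) X"
  by (rule isomorphicI[of "ru X"]) auto

lemma isomorphic_braid: "X \<in> ob M \<Longrightarrow> Y \<in> ob M \<Longrightarrow> isomorphic M (X \<odot> Y) (Y \<odot> X)"
  by (rule isomorphicI[of "br X Y"]) auto

lemma isomorphic_middle_four:
  assumes "X \<in> ob M" "A \<in> ob M" "Y \<in> ob M" "B \<in> ob M"
  shows "isomorphic M ((X \<odot> A) \<odot> (Y \<odot> B)) ((X \<odot> Y) \<odot> (A \<odot> B))"
proof -
  have "isomorphic M ((X \<odot> A) \<odot> (Y \<odot> B)) (X \<odot> (A \<odot> (Y \<odot> B)))"
    by (rule isomorphic_assoc) (use assms in auto)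
  also have "isomorphic M \<dots> (X \<odot> ((A \<odot> Y) \<odot> B))"
    by (rule isomorphic_otens[OF isomorphic_refl isomorphic_sym[OF isomorphic_assoc]]) (use assms in auto)
  also have "isomorphic M \<dots> (X \<odot> ((Y \<odot> A) \<odot> B))"
    by (rule isomorphic_otens[OF isomorphic_refl isomorphic_otens[OF isomorphic_braid isomorphic_refl]])
      (use assms in auto)
  also have "isomorphic M \<dots> (X \<odot> (Y \<odot> (A \<odot> B)))"
    by (rule isomorphic_otens[OF isomorphic_refl isomorphic_assoc]) (use assms in auto)
  also have "isomorphic M \<dots> ((X \<odot> Y) \<odot> (A \<odot> B))"
    by (rule isomorphic_sym[OF isomorphic_assoc]) (use assms in auto)
  finally show ?thesis .
qed

lemma iso_congruence_M: "iso_congruence M"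
proof unfold_locales
  fix X X' Y Y' Z
  show "isomorphic M X Y \<Longrightarrow> X \<in> ob M \<and> Y \<in> ob M" using isomorphic_ob by blast
  show "X \<in> ob M \<Longrightarrow> isomorphic M X X" by (rule isomorphic_refl)
  show "isomorphic M X Y \<Longrightarrow> isomorphic M Y X" by (rule isomorphic_sym)
  show "isomorphic M X Y \<Longrightarrow> isomorphic M Y Z \<Longrightarrow> isomorphic M X Z" by (rule isomorphic_trans)
  show "X \<in> ob M \<Longrightarrow> Y \<in> ob M \<Longrightarrow> X \<odot> Y \<in> ob M" by simp
  show "isomorphic M X X' \<Longrightarrow> isomorphic M Y Y' \<Longrightarrow> isomorphic M (X \<odot> Y) (X' \<odot> Y')"
    by (rule isomorphic_otens)
qed

sublocale K: iso_congruence M by (fact iso_congruence_M)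

lemma cmp_eq_extend: "a \<bullet> b = c \<bullet> d \<Longrightarrow>
    a \<in> mor M \<Longrightarrow> b \<in> mor M \<Longrightarrow> c \<in> mor M \<Longrightarrow> d \<in> mor M \<Longrightarrow> k \<in> mor M \<Longrightarrow>
    tgt M b = src M a \<Longrightarrow> tgt M d = src M c \<Longrightarrow> tgt M k = src M b \<Longrightarrow> src M d = src M b \<Longrightarrow>
    a \<bullet> (b \<bullet> k) = c \<bullet> (d \<bullet> k)"
proof -
  assume h: "a \<bullet> b = c \<bullet> d" "a \<in> mor M" "b \<in> mor M" "c \<in> mor M" "d \<in> mor M" "k \<in> mor M"
    "tgt M b = src M a" "tgt M d = src M c" "tgt M k = src M b" "src M d = src M b"
  have "a \<bullet> (b \<bullet> k) = (a \<bullet> b) \<bullet> k" using h(2-) by simp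
  also have "\<dots> = (c \<bullet> d) \<bullet> k" using h(1) by simp
  also have "\<dots> = c \<bullet> (d \<bullet> k)" using h by simp
  finally show ?thesis .
qed

lemma cmp_eq_extend1: "a \<bullet> b = c \<Longrightarrow> a \<in> mor M \<Longrightarrow> b \<in> mor M \<Longrightarrow> k \<in> mor M \<Longrightarrow>
    tgt M b = src M a \<Longrightarrow> tgt M k = src M b \<Longrightarrow> a \<bullet> (b \<bullet> k) = c \<bullet> k"
  by (subst cmp_assoc[symmetric]) simp_all

lemma mtens_cmp: "f \<in> mor M \<Longrightarrow> g \<in> mor M \<Longrightarrow> f' \<in> mor M \<Longrightarrow> g' \<in> mor M \<Longrightarrow>
    tgt M f = src M g \<Longrightarrow> tgt M f' = src M g' \<Longrightarrow> (g \<diamond> g') \<bullet> (f \<diamond> f') = (g \<bullet> f) \<diamond> (g' \<bullet> f')"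
  using interchange by simp

lemma mtens_cmp_extend: "f \<in> mor M \<Longrightarrow> g \<in> mor M \<Longrightarrow> f' \<in> mor M \<Longrightarrow> g' \<in> mor M \<Longrightarrow>
    tgt M f = src M g \<Longrightarrow> tgt M f' = src M g' \<Longrightarrow> k \<in> mor M \<Longrightarrow> tgt M k = src M f \<odot> src M f' \<Longrightarrow>
    (g \<diamond> g') \<bullet> ((f \<diamond> f') \<bullet> k) = ((g \<bullet> f) \<diamond> (g' \<bullet> f')) \<bullet> k"
proof -
  assume h: "f \<in> mor M" "g \<in> mor M" "f' \<in> mor M" "g' \<in> mor M" "tgt M f = src M g" "tgt M f' = src M g'"
      "k \<in> mor M" "tgt M k = src M f \<odot> src M f'"
  have "(g \<diamond> g') \<bullet> ((f \<diamond> f') \<bullet> k) = ((g \<diamond> g') \<bullet> (f \<diamond> f')) \<bullet> k" using h by simp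
  also have "\<dots> = ((g \<bullet> f) \<diamond> (g' \<bullet> f')) \<bullet> k" using h by (simp add: mtens_cmp)
  finally show ?thesis .
qed

lemma iso_cancel_left:
  assumes "is_iso f" "g \<in> mor M" "h \<in> mor M" "tgt M g = src M f" "tgt M h = src M f" "f \<bullet> g = f \<bullet> h"
  shows "g = h"
proof -
  have "g = iv f \<bullet> (f \<bullet> g)" using assms(1-5) by simp
  also have "\<dots> = iv f \<bullet> (f \<bullet> h)" using assms(6) by simp
  also have "\<dots> = h" using assms by simp
  finally show ?thesis .
qed

lemma iso_cancel_right:
  assumes "is_iso f" "g \<in> mor M" "h \<in> mor M" "src M g = tgt M f" "src M h = tgt M f" "g \<bullet> f = h \<bullet> f"
  shows "g = h"
proof -
  have "g = (g \<bullet> f) \<bullet> iv f" using assms(1-5) by simp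
  also have "\<dots> = (h \<bullet> f) \<bullet> iv f" using assms(6) by simp
  also have "\<dots> = h" using assms by simp
  finally show ?thesis .
qed

lemma mtens_unit_inj:
  assumes "u \<in> mor M" "v \<in> mor M" "src M u = src M v" "tgt M u = tgt M v" "u \<diamond> idm I = v \<diamond> idm I"
  shows "u = v"
proof (rule iso_cancel_right[of "ru (src M u)"])
  have "u \<bullet> ru (src M u) = ru (tgt M u) \<bullet> (u \<diamond> idm I)" using runit_natural[OF assms(1)] by simp
  also have "\<dots> = ru (tgt M v) \<bullet> (v \<diamond> idm I)" using assms by simp
  also have "\<dots> = v \<bullet> ru (src M u)" using runit_natural[OF assms(2)] assms by simp
  finally show "u \<bullet> ru (src M u) = v \<bullet> ru (src M u)" .
qed (use assms in auto)

lemma iso_square_inv: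
  assumes "is_iso a" "is_iso b" "x \<in> mor M" "y \<in> mor M" "src M a = tgt M x" "tgt M b = src M y"
    "src M x = src M b" "tgt M y = tgt M a" "a \<bullet> x = y \<bullet> b"
  shows "iv a \<bullet> y = x \<bullet> iv b"
proof -
  have k: "y \<bullet> (b \<bullet> iv b) = a \<bullet> (x \<bullet> iv b)"
    by (rule cmp_eq_extend[OF assms(9)[symmetric]]) (use assms(1-8) in simp_all)
  have "iv a \<bullet> y = iv a \<bullet> (y \<bullet> (b \<bullet> iv b))" using assms(1-8) by simp
  also have "\<dots> = iv a \<bullet> (a \<bullet> (x \<bullet> iv b))" by (simp only: k)
  also have "\<dots> = x \<bullet> iv b" using assms(1-8) by simp
  finally show ?thesis .
qed

lemma iso_cmp_eq_inv: assumes "is_iso tV" "x \<in> mor M" "tgt M x = src M tV" "tV \<bullet> x = y"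
  shows "x = iv tV \<bullet> y"
proof -
  have "x = iv tV \<bullet> (tV \<bullet> x)" using assms(1-3) by simp
  then show ?thesis using assms(4) by simp
qed

lemma iso_conj_eq:
  assumes "is_iso tU" "is_iso tV" "x \<in> mor M" "h \<in> mor M" "src M x = src M tU" "tgt M x = src M tV"
    "src M h = tgt M tU" "tgt M h = tgt M tV" "tV \<bullet> x = h \<bullet> tU"
  shows "h = tV \<bullet> (x \<bullet> iv tU)"
proof -
  have k: "h \<bullet> (tU \<bullet> iv tU) = tV \<bullet> (x \<bullet> iv tU)"
    by (rule cmp_eq_extend[OF assms(9)[symmetric]]) (use assms(1-8) in simp_all)
  have "h = h \<bullet> (tU \<bullet> iv tU)" using assms(1-8) by simp
  also have "\<dots> = tV \<bullet> (x \<bullet> iv tU)" by (rule k)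
  finally show ?thesis .
qed

lemma is_iso_if_left_inverse:
  assumes "f \<in> mor M" "k \<in> mor M" "src M k = tgt M f" "tgt M k = src M f"
    and "k \<bullet> f = idm (src M f)" "is_iso (f \<bullet> k)"
  shows "is_iso f"
proof -
  define r where "r = k \<bullet> iv (f \<bullet> k)"
  have r: "r \<in> mor M" "src M r = tgt M f" "tgt M r = src M f" unfolding r_def using assms by simp_all
  have fr: "f \<bullet> r = idm (tgt M f)" unfolding r_def using assms
    by (subst cmp_assoc[symmetric]) simp_all
  have "r = (k \<bullet> f) \<bullet> r" using assms(5) r by simp
  also have "\<dots> = k \<bullet> (f \<bullet> r)" by (rule cmp_assoc) (use assms r in simp_all)
  also have "\<dots> = k" using fr assms by simp
  finally have "f \<bullet> k = idm (tgt M f)" using fr by simp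
  then show ?thesis by (rule is_isoI[OF assms(1-5)])
qed

text \<open>Kelly's coherence lemma, which is not among the axioms; it follows from the pentagon and
  the triangle because \<open>- \<otimes> I\<close> is faithful.\<close>

lemma runit_otens: assumes Y: "Y \<in> ob M" and A: "A \<in> ob M"
  shows "(idm Y \<diamond> ru A) \<bullet> asc Y A I = ru (Y \<odot> A)"
proof (rule mtens_unit_inj)
  have e1: "(idm Y \<diamond> (idm A \<diamond> lu I)) \<bullet> asc Y A (I \<odot> I) = asc Y A I \<bullet> (idm (Y \<odot> A) \<diamond> lu I)"
    using assoc_natural[of "idm Y" "idm A" "lu I"] Y A by simp
  have e2: "(idm (Y \<odot> A) \<diamond> lu I) \<bullet> asc (Y \<odot> A) I I = ru (Y \<odot> A) \<diamond> idm I"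
    using triangle[of "Y \<odot> A" I] Y A by simp
  have e3: "(idm A \<diamond> lu I) \<bullet> asc A I I = ru A \<diamond> idm I" using triangle[of A I] A by simp
  have e4: "asc Y A I \<bullet> ((idm Y \<diamond> ru A) \<diamond> idm I) = (idm Y \<diamond> (ru A \<diamond> idm I)) \<bullet> asc Y (A \<odot> I) I"
    using assoc_natural[of "idm Y" "ru A" "idm I"] Y A by simp
  have P: "asc Y A (I \<odot> I) \<bullet> asc (Y \<odot> A) I I =
      (idm Y \<diamond> asc A I I) \<bullet> (asc Y (A \<odot> I) I \<bullet> (asc Y A I \<diamond> idm I))"
    using pentagon[of Y A I I] Y A by simp
  have "asc Y A I \<bullet> (ru (Y \<odot> A) \<diamond> idm I) = asc Y A I \<bullet> ((idm (Y \<odot> A) \<diamond> lu I) \<bullet> asc (Y \<odot> A) I I)"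
    using e2 by simp
  also have "\<dots> = (idm Y \<diamond> (idm A \<diamond> lu I)) \<bullet> (asc Y A (I \<odot> I) \<bullet> asc (Y \<odot> A) I I)"
    using Y A by (simp add: cmp_eq_extend[OF e1])
  also have "\<dots> =
      (idm Y \<diamond> (idm A \<diamond> lu I)) \<bullet> ((idm Y \<diamond> asc A I I) \<bullet> (asc Y (A \<odot> I) I \<bullet> (asc Y A I \<diamond> idm I)))"
    using P by simp
  also have "\<dots> = (idm Y \<diamond> ((idm A \<diamond> lu I) \<bullet> asc A I I)) \<bullet> (asc Y (A \<odot> I) I \<bullet> (asc Y A I \<diamond> idm I))"
    using Y A by (simp add: mtens_cmp_extend)
  also have "\<dots> = (idm Y \<diamond> (ru A \<diamond> idm I)) \<bullet> (asc Y (A \<odot> I) I \<bullet> (asc Y A I \<diamond> idm I))"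
    using e3 by simp
  also have "\<dots> = asc Y A I \<bullet> (((idm Y \<diamond> ru A) \<diamond> idm I) \<bullet> (asc Y A I \<diamond> idm I))"
    using Y A by (simp add: cmp_eq_extend[OF e4, symmetric])
  also have "\<dots> = asc Y A I \<bullet> (((idm Y \<diamond> ru A) \<bullet> asc Y A I) \<diamond> idm I)"
    using Y A by (simp add: mtens_cmp)
  finally have "asc Y A I \<bullet> (ru (Y \<odot> A) \<diamond> idm I) = asc Y A I \<bullet> (((idm Y \<diamond> ru A) \<bullet> asc Y A I) \<diamond> idm I)" .
  then have "ru (Y \<odot> A) \<diamond> idm I = ((idm Y \<diamond> ru A) \<bullet> asc Y A I) \<diamond> idm I"
    by (rule iso_cancel_left[rotated 5]) (use Y A in simp_all)
  then show "((idm Y \<diamond> ru A) \<bullet> asc Y A I) \<diamond> idm I = ru (Y \<odot> A) \<diamond> idm I" by (rule sym)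
qed (use Y A in auto)

section \<open>Weakly invertible objects\<close>

abbreviation wi where "wi A \<equiv> weakly_invertible M A"

lemma wi_iff: "wi A \<longleftrightarrow> A \<in> ob M \<and> (\<exists>B \<in> ob M. isomorphic M (A \<odot> B) I \<and> isomorphic M (B \<odot> A) I)"
  unfolding weakly_invertible_def by simp

lemma wi_ob: "wi A \<Longrightarrow> A \<in> ob M" unfolding wi_iff by simp

lemma wi_unit: "wi I"
  unfolding wi_iff using isomorphic_lunit[of I] by auto

lemma wi_invE: assumes "wi A" obtains B where "wi B" "isomorphic M (A \<odot> B) I" "isomorphic M (B \<odot> A) I"
  using assms unfolding wi_iff by blast

lemma wi_isomorphic: assumes "wi A" "isomorphic M A A'" shows "wi A'"
proof -
  obtain B where B: "B \<in> ob M" "isomorphic M (A \<odot> B) I" "isomorphic M (B \<odot> A) I"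
    using assms(1) unfolding wi_iff by blast
  have "isomorphic M (A' \<odot> B) I"
    using isomorphic_trans[OF isomorphic_otens[OF isomorphic_sym[OF assms(2)] isomorphic_refl[OF B(1)]] B(2)] .
  moreover have "isomorphic M (B \<odot> A') I"
    using isomorphic_trans[OF isomorphic_otens[OF isomorphic_refl[OF B(1)] isomorphic_sym[OF assms(2)]] B(3)] .
  ultimately show ?thesis using B(1) isomorphic_ob(2)[OF assms(2)] unfolding wi_iff by blast
qed

lemma isomorphic_unit_otens:
  assumes o: "A \<in> ob M" "A' \<in> ob M" "B \<in> ob M" "B' \<in> ob M"
    and AA': "isomorphic M (A \<odot> A') I" and BB': "isomorphic M (B \<odot> B') I"
  shows "isomorphic M (A \<odot> B \<odot> (B' \<odot> A')) I"
proof -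
  have "isomorphic M (A \<odot> B \<odot> (B' \<odot> A')) (A \<odot> (B \<odot> (B' \<odot> A')))"
    using o by (simp add: isomorphic_assoc)
  also have "isomorphic M \<dots> (A \<odot> ((B \<odot> B') \<odot> A'))"
    by (rule isomorphic_otens[OF isomorphic_refl isomorphic_sym[OF isomorphic_assoc]]) (use o in auto)
  also have "isomorphic M \<dots> (A \<odot> (I \<odot> A'))"
    by (rule isomorphic_otens[OF isomorphic_refl isomorphic_otens[OF BB' isomorphic_refl]]) (use o in auto)
  also have "isomorphic M \<dots> (A \<odot> A')"
    by (rule isomorphic_otens[OF isomorphic_refl isomorphic_lunit]) (use o in auto)
  finally show ?thesis using AA' by (rule isomorphic_trans)
qed

lemma wi_otens: assumes "wi A" "wi B" shows "wi (A \<odot> B)"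
proof -
  obtain A' where A': "A' \<in> ob M" "isomorphic M (A \<odot> A') I" "isomorphic M (A' \<odot> A) I"
    using assms(1) unfolding wi_iff by blast
  obtain B' where B': "B' \<in> ob M" "isomorphic M (B \<odot> B') I" "isomorphic M (B' \<odot> B) I"
    using assms(2) unfolding wi_iff by blast
  have o: "A \<in> ob M" "B \<in> ob M" using assms wi_ob by auto
  show ?thesis
    unfolding wi_iff
    using o A' B' isomorphic_unit_otens[of A A' B B'] isomorphic_unit_otens[of B' B A' A] by auto
qed

lemma PicCat_simps: "ob (PicCat M) = {A. wi A}" "otens (PicCat M) = otens M"
  "mor (PicCat M) = {f \<in> mor M. is_iso f \<and> wi (src M f) \<and> wi (tgt M f)}"
  "src (PicCat M) = src M" "tgt (PicCat M) = tgt M" "cmp (PicCat M) = cmp M"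
  "ident (PicCat M) = ident M"
  unfolding PicCat_def by simp_all

lemma isomorphic_PicCat_iff: "isomorphic (PicCat M) X Y \<longleftrightarrow> wi X \<and> wi Y \<and> isomorphic M X Y"
proof
  assume "isomorphic (PicCat M) X Y"
  then obtain f where "hom_in (PicCat M) f X Y" "iso_in (PicCat M) f"
    unfolding isomorphic_def by blast
  then show "wi X \<and> wi Y \<and> isomorphic M X Y"
    unfolding hom_in_def PicCat_simps using isomorphicI by auto
next
  assume a: "wi X \<and> wi Y \<and> isomorphic M X Y"
  then obtain f where f: "f \<in> mor M" "src M f = X" "tgt M f = Y" "is_iso f"
    by (auto elim!: isomorphicE)
  have "hom_in (PicCat M) f X Y" unfolding hom_in_def PicCat_simps using f a by simp
  moreover have "iso_in (PicCat M) f" unfolding iso_in_def[of "PicCat M"] PicCat_simps using f a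
    by (intro conjI bexI[of _ "iv f"]) simp_all
  ultimately show "isomorphic (PicCat M) X Y" unfolding isomorphic_def by blast
qed

lemma iso_congruence_PicCat: "iso_congruence (PicCat M)"
proof unfold_locales
  fix X X' Y Y' Z
  show "isomorphic (PicCat M) X Y \<Longrightarrow> X \<in> ob (PicCat M) \<and> Y \<in> ob (PicCat M)"
    unfolding isomorphic_PicCat_iff PicCat_simps by simp
  show "X \<in> ob (PicCat M) \<Longrightarrow> isomorphic (PicCat M) X X"
    unfolding isomorphic_PicCat_iff PicCat_simps using isomorphic_refl wi_ob by simp
  show "isomorphic (PicCat M) X Y \<Longrightarrow> isomorphic (PicCat M) Y X"
    unfolding isomorphic_PicCat_iff using isomorphic_sym by simp
  show "isomorphic (PicCat M) X Y \<Longrightarrow> isomorphic (PicCat M) Y Z \<Longrightarrow> isomorphic (PicCat M) X Z"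
    unfolding isomorphic_PicCat_iff using isomorphic_trans by blast
  show "X \<in> ob (PicCat M) \<Longrightarrow> Y \<in> ob (PicCat M) \<Longrightarrow> otens (PicCat M) X Y \<in> ob (PicCat M)"
    unfolding PicCat_simps using wi_otens by simp
  show "isomorphic (PicCat M) X X' \<Longrightarrow> isomorphic (PicCat M) Y Y' \<Longrightarrow>
      isomorphic (PicCat M) (otens (PicCat M) X Y) (otens (PicCat M) X' Y')"
    unfolding isomorphic_PicCat_iff PicCat_simps using wi_otens isomorphic_otens by simp
qed

sublocale Pic: iso_congruence "PicCat M" by (fact iso_congruence_PicCat)

lemma wi_inverseE: assumes "wi A"
  obtains B e e' where "wi B" "e \<in> mor M" "src M e = A \<odot> B" "tgt M e = I" "is_iso e"
    "e' \<in> mor M" "src M e' = B \<odot> A" "tgt M e' = I" "is_iso e'"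
proof -
  obtain B where B: "wi B" "isomorphic M (A \<odot> B) I" "isomorphic M (B \<odot> A) I"
    using assms by (rule wi_invE)
  obtain e where "e \<in> mor M" "src M e = A \<odot> B" "tgt M e = I" "is_iso e"
    using B(2) by (rule isomorphicE)
  moreover obtain e' where "e' \<in> mor M" "src M e' = B \<odot> A" "tgt M e' = I" "is_iso e'"
    using B(3) by (rule isomorphicE)
  ultimately show ?thesis using that B(1) by blast
qed

text \<open>For \<open>e : B \<otimes> A \<cong> I\<close>, an isomorphism \<open>B \<otimes> (A \<otimes> U) \<cong> U\<close> natural in \<open>U\<close>; it exhibits
  \<open>B \<otimes> -\<close> as a quasi-inverse of \<open>A \<otimes> -\<close>.\<close>

definition cancel_iso :: "'o \<Rightarrow> 'o \<Rightarrow> 'm \<Rightarrow> 'o \<Rightarrow> 'm" where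
  "cancel_iso B A e U = lu U \<bullet> ((e \<diamond> idm U) \<bullet> iv (asc B A U))"

lemma cancel_iso_mor:
  assumes "B \<in> ob M" "A \<in> ob M" "U \<in> ob M" "is_iso e" "src M e = B \<odot> A" "tgt M e = I"
  shows "cancel_iso B A e U \<in> mor M" "src M (cancel_iso B A e U) = B \<odot> (A \<odot> U)"
    "tgt M (cancel_iso B A e U) = U" "is_iso (cancel_iso B A e U)"
  unfolding cancel_iso_def using assms by auto

lemma cancel_iso_natural:
  assumes o: "B \<in> ob M" "A \<in> ob M" "U \<in> ob M" "V \<in> ob M" and e: "is_iso e" "src M e = B \<odot> A" "tgt M e = I"
    and h: "h \<in> mor M" "src M h = U" "tgt M h = V"
  shows "cancel_iso B A e V \<bullet> (idm B \<diamond> (idm A \<diamond> h)) = h \<bullet> cancel_iso B A e U"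
proof -
  have n1: "asc B A V \<bullet> (idm (B \<odot> A) \<diamond> h) = (idm B \<diamond> (idm A \<diamond> h)) \<bullet> asc B A U"
    using assoc_natural[of "idm B" "idm A" h] o h by simp
  have n1': "iv (asc B A V) \<bullet> (idm B \<diamond> (idm A \<diamond> h)) = (idm (B \<odot> A) \<diamond> h) \<bullet> iv (asc B A U)"
    by (rule iso_square_inv[OF _ _ _ _ _ _ _ _ n1]) (use o h in simp_all)
  have n2: "(e \<diamond> idm V) \<bullet> (idm (B \<odot> A) \<diamond> h) = (idm I \<diamond> h) \<bullet> (e \<diamond> idm U)"
    using o e h by (simp add: mtens_cmp)
  have n3: "lu V \<bullet> (idm I \<diamond> h) = h \<bullet> lu U" using lunit_natural[OF h(1)] h by simp
  have "cancel_iso B A e V \<bullet> (idm B \<diamond> (idm A \<diamond> h)) =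
      lu V \<bullet> ((e \<diamond> idm V) \<bullet> (iv (asc B A V) \<bullet> (idm B \<diamond> (idm A \<diamond> h))))"
    unfolding cancel_iso_def using o e h by simp
  also have "\<dots> = lu V \<bullet> ((e \<diamond> idm V) \<bullet> ((idm (B \<odot> A) \<diamond> h) \<bullet> iv (asc B A U)))" using n1' by simp
  also have "\<dots> = lu V \<bullet> ((idm I \<diamond> h) \<bullet> ((e \<diamond> idm U) \<bullet> iv (asc B A U)))"
    using o e h by (simp add: cmp_eq_extend[OF n2])
  also have "\<dots> = h \<bullet> (lu U \<bullet> ((e \<diamond> idm U) \<bullet> iv (asc B A U)))"
    using o e h by (simp add: cmp_eq_extend[OF n3])
  finally show ?thesis unfolding cancel_iso_def .
qed

lemma mtens_ident_inj:
  assumes o: "B \<in> ob M" "A \<in> ob M" and e: "is_iso e" "src M e = B \<odot> A" "tgt M e = I"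
    and h: "h1 \<in> mor M" "h2 \<in> mor M" "src M h1 = src M h2" "tgt M h1 = tgt M h2"
    and eq: "idm A \<diamond> h1 = idm A \<diamond> h2"
  shows "h1 = h2"
proof -
  define U where "U = src M h1"
  define V where "V = tgt M h1"
  have hh: "src M h1 = U" "tgt M h1 = V" "src M h2 = U" "tgt M h2 = V" using h unfolding U_def V_def by auto
  have oo: "U \<in> ob M" "V \<in> ob M" using h unfolding U_def V_def by auto
  note T = cancel_iso_mor[OF o oo(1) e] cancel_iso_mor[OF o oo(2) e]
  have n1: "cancel_iso B A e V \<bullet> (idm B \<diamond> (idm A \<diamond> h1)) = h1 \<bullet> cancel_iso B A e U"
    by (rule cancel_iso_natural[OF o oo e h(1) hh(1,2)])
  have n2: "cancel_iso B A e V \<bullet> (idm B \<diamond> (idm A \<diamond> h2)) = h2 \<bullet> cancel_iso B A e U"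
    by (rule cancel_iso_natural[OF o oo e h(2) hh(3,4)])
  have c2: "h2 = cancel_iso B A e V \<bullet> ((idm B \<diamond> (idm A \<diamond> h2)) \<bullet> iv (cancel_iso B A e U))"
    by (rule iso_conj_eq[OF T(4) T(8) _ h(2) _ _ _ _ n2]) (use T o oo h hh in simp_all)
  have "h1 = cancel_iso B A e V \<bullet> ((idm B \<diamond> (idm A \<diamond> h1)) \<bullet> iv (cancel_iso B A e U))"
    by (rule iso_conj_eq[OF T(4) T(8) _ h(1) _ _ _ _ n1]) (use T o oo h hh in simp_all)
  also have "\<dots> = cancel_iso B A e V \<bullet> ((idm B \<diamond> (idm A \<diamond> h2)) \<bullet> iv (cancel_iso B A e U))" by (simp only: eq)
  also have "\<dots> = h2" by (rule c2[symmetric])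
  finally show ?thesis .
qed

lemma wi_mtens_inj:
  assumes "wi A" "h1 \<in> mor M" "h2 \<in> mor M" "src M h1 = src M h2" "tgt M h1 = tgt M h2"
    and "idm A \<diamond> h1 = idm A \<diamond> h2"
  shows "h1 = h2"
proof -
  obtain B e e' where "wi B" "e \<in> mor M" "src M e = A \<odot> B" "tgt M e = I" "is_iso e"
    "e' \<in> mor M" "src M e' = B \<odot> A" "tgt M e' = I" "is_iso e'" using assms(1) by (rule wi_inverseE)
  then show ?thesis using mtens_ident_inj[of B A e' h1 h2] assms wi_ob by blast
qed

lemma wi_mtens_full:
  assumes A: "wi A" and o: "U \<in> ob M" "V \<in> ob M" and h: "h \<in> mor M" "src M h = A \<odot> U" "tgt M h = A \<odot> V"
  shows "\<exists>h'. h' \<in> mor M \<and> src M h' = U \<and> tgt M h' = V \<and> idm A \<diamond> h' = h"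
proof -
  obtain B e e' where B: "wi B" "e \<in> mor M" "src M e = A \<odot> B" "tgt M e = I" "is_iso e"
    "e' \<in> mor M" "src M e' = B \<odot> A" "tgt M e' = I" "is_iso e'" using assms(1) by (rule wi_inverseE)
  have oA: "A \<in> ob M" "B \<in> ob M" using A B(1) wi_ob by auto
  note T = cancel_iso_mor[OF oA(2) oA(1) _ B(9,7,8)]
  define h' where "h' = cancel_iso B A e' V \<bullet> ((idm B \<diamond> h) \<bullet> iv (cancel_iso B A e' U))"
  have h'm: "h' \<in> mor M" "src M h' = U" "tgt M h' = V" unfolding h'_def using T o oA h by simp_all
  have n: "cancel_iso B A e' V \<bullet> (idm B \<diamond> (idm A \<diamond> h')) = h' \<bullet> cancel_iso B A e' U"
    by (rule cancel_iso_natural[OF oA(2) oA(1) o B(9,7,8) h'm])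
  have "idm B \<diamond> (idm A \<diamond> h') = iv (cancel_iso B A e' V) \<bullet> (h' \<bullet> cancel_iso B A e' U)"
    by (rule iso_cmp_eq_inv[OF _ _ _ n]) (use T o oA h'm in simp_all)
  also have "\<dots> = idm B \<diamond> h" unfolding h'_def using T o oA h by simp
  finally have "idm B \<diamond> (idm A \<diamond> h') = idm B \<diamond> h" .
  then have "idm A \<diamond> h' = h"
    by (rule mtens_ident_inj[OF oA(1) oA(2) B(5,3,4), rotated 4]) (use h h'm oA o in simp_all)
  then show ?thesis using h'm by blast
qed

lemma wi_mtens_reflects_iso: assumes A: "wi A" and p: "p \<in> mor M" "is_iso (idm A \<diamond> p)"
  shows "is_iso p"
proof -
  have o: "src M p \<in> ob M" "tgt M p \<in> ob M" "A \<in> ob M" using p A wi_ob by auto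
  obtain q where q: "q \<in> mor M" "src M q = tgt M p" "tgt M q = src M p" "idm A \<diamond> q = iv (idm A \<diamond> p)"
    using wi_mtens_full[OF A o(2) o(1), of "iv (idm A \<diamond> p)"] p o by auto
  have 1: "q \<bullet> p = idm (src M p)"
  proof (rule wi_mtens_inj[OF A])
    have "idm A \<diamond> (q \<bullet> p) = (idm A \<diamond> q) \<bullet> (idm A \<diamond> p)" using q(1-3) p o by (simp add: mtens_cmp)
    also have "\<dots> = iv (idm A \<diamond> p) \<bullet> (idm A \<diamond> p)" using q(4) by simp
    also have "\<dots> = idm A \<diamond> idm (src M p)" using p o by simp
    finally show "idm A \<diamond> (q \<bullet> p) = idm A \<diamond> idm (src M p)" .
  qed (use q(1-3) p(1) o in simp_all)
  have 2: "p \<bullet> q = idm (tgt M p)"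
  proof (rule wi_mtens_inj[OF A])
    have "idm A \<diamond> (p \<bullet> q) = (idm A \<diamond> p) \<bullet> (idm A \<diamond> q)" using q(1-3) p o by (simp add: mtens_cmp)
    also have "\<dots> = (idm A \<diamond> p) \<bullet> iv (idm A \<diamond> p)" using q(4) by simp
    also have "\<dots> = idm A \<diamond> idm (tgt M p)" using p o by simp
    finally show "idm A \<diamond> (p \<bullet> q) = idm A \<diamond> idm (tgt M p)" .
  qed (use q(1-3) p(1) o in simp_all)
  show ?thesis by (rule is_isoI[OF p(1) q(1) q(2) q(3) 1 2])
qed

section \<open>Invertible morphisms of \<open>P(M)\<close>\<close>

lemma triangle_inv: assumes o: "Y \<in> ob M" "A \<in> ob M"
  shows "asc Y I A \<bullet> (iv (ru Y) \<diamond> idm A) = idm Y \<diamond> iv (lu A)"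
proof -
  have "(idm Y \<diamond> lu A) \<bullet> asc Y I A = ru Y \<diamond> idm A" using triangle o by simp
  then have "asc Y I A = iv (idm Y \<diamond> lu A) \<bullet> (ru Y \<diamond> idm A)"
    by (rule iso_cmp_eq_inv[rotated 3]) (use o in simp_all)
  then show ?thesis using o by (simp add: mtens_cmp)
qed

lemma assoc_inv_pentagon: assumes o: "Y \<in> ob M" "A \<in> ob M" "B \<in> ob M"
  shows "asc (Y \<odot> A) B A \<bullet> (iv (asc Y A B) \<diamond> idm A) =
    iv (asc Y A (B \<odot> A)) \<bullet> ((idm Y \<diamond> asc A B A) \<bullet> asc Y (A \<odot> B) A)"
proof -
  have "asc Y A (B \<odot> A) \<bullet> asc (Y \<odot> A) B A =
      (idm Y \<diamond> asc A B A) \<bullet> (asc Y (A \<odot> B) A \<bullet> (asc Y A B \<diamond> idm A))"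
    using pentagon[of Y A B A] o by simp
  then have "asc Y A (B \<odot> A) \<bullet> (asc (Y \<odot> A) B A \<bullet> (iv (asc Y A B) \<diamond> idm A)) =
      (idm Y \<diamond> asc A B A) \<bullet> ((asc Y (A \<odot> B) A \<bullet> (asc Y A B \<diamond> idm A)) \<bullet> (iv (asc Y A B) \<diamond> idm A))"
    by (rule cmp_eq_extend) (use o in simp_all)
  also have "\<dots> = (idm Y \<diamond> asc A B A) \<bullet> asc Y (A \<odot> B) A"
    using o by (simp add: mtens_cmp)
  finally show ?thesis
    by (rule iso_cmp_eq_inv[rotated 3]) (use o in simp_all)
qed

text \<open>Given \<open>e : A \<otimes> B \<cong> I\<close>, the isomorphism \<open>B \<otimes> A \<cong> I\<close> is chosen so that together with
  \<open>e\<close> it satisfies the zigzag identity of an adjoint equivalence; it exists because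
  \<open>A \<otimes> -\<close> is fully faithful.\<close>

lemma wi_zigzag:
  assumes A: "wi A" and B: "B \<in> ob M" and e: "e \<in> mor M" "src M e = A \<odot> B" "tgt M e = I" "is_iso e"
  obtains \<alpha> where "\<alpha> \<in> mor M" "src M \<alpha> = B \<odot> A" "tgt M \<alpha> = I" "is_iso \<alpha>"
    "(idm A \<diamond> \<alpha>) \<bullet> (asc A B A \<bullet> ((iv e \<diamond> idm A) \<bullet> iv (lu A))) = iv (ru A)"
proof -
  have oA: "A \<in> ob M" using A wi_ob by simp
  define \<phi> where "\<phi> = asc A B A \<bullet> ((iv e \<diamond> idm A) \<bullet> iv (lu A))"
  have \<phi>: "\<phi> \<in> mor M" "src M \<phi> = A" "tgt M \<phi> = A \<odot> (B \<odot> A)" "is_iso \<phi>"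
    unfolding \<phi>_def using oA B e by simp_all
  obtain \<psi> where \<psi>: "\<psi> \<in> mor M" "src M \<psi> = I" "tgt M \<psi> = B \<odot> A" "idm A \<diamond> \<psi> = \<phi> \<bullet> ru A"
    using wi_mtens_full[OF A unit_ob, of "B \<odot> A" "\<phi> \<bullet> ru A"] \<phi> oA B by auto
  have \<psi>_iso: "is_iso \<psi>"
    by (rule wi_mtens_reflects_iso[OF A \<psi>(1)]) (use \<psi> \<phi> oA in simp)
  have "\<phi> = (idm A \<diamond> \<psi>) \<bullet> iv (ru A)" using \<psi>(4) \<phi> oA by simp
  then have "(idm A \<diamond> iv \<psi>) \<bullet> \<phi> = (idm A \<diamond> iv \<psi>) \<bullet> ((idm A \<diamond> \<psi>) \<bullet> iv (ru A))" by simp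
  also have "\<dots> = iv (ru A)" using \<psi>(1-3) \<psi>_iso oA by (simp add: mtens_cmp_extend)
  finally show ?thesis
    using that[of "iv \<psi>"] \<psi> \<psi>_iso unfolding \<phi>_def by simp
qed

lemma assoc_unit_inverse:
  assumes o: "Y \<in> ob M" "A \<in> ob M" "B \<in> ob M"
    and e: "e \<in> mor M" "src M e = A \<odot> B" "tgt M e = I" "is_iso e"
  shows "asc (Y \<odot> A) B A \<bullet> ((iv (asc Y A B) \<bullet> ((idm Y \<diamond> iv e) \<bullet> iv (ru Y))) \<diamond> idm A) =
    iv (asc Y A (B \<odot> A)) \<bullet> (idm Y \<diamond> (asc A B A \<bullet> ((iv e \<diamond> idm A) \<bullet> iv (lu A))))"
proof -
  have nat: "asc Y (A \<odot> B) A \<bullet> ((idm Y \<diamond> iv e) \<diamond> idm A) = (idm Y \<diamond> (iv e \<diamond> idm A)) \<bullet> asc Y I A"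
    using assoc_natural[of "idm Y" "iv e" "idm A"] o e by simp
  have "(iv (asc Y A B) \<bullet> ((idm Y \<diamond> iv e) \<bullet> iv (ru Y))) \<diamond> idm A =
      (iv (asc Y A B) \<diamond> idm A) \<bullet> (((idm Y \<diamond> iv e) \<diamond> idm A) \<bullet> (iv (ru Y) \<diamond> idm A))"
    using o e by (simp add: mtens_cmp_extend mtens_cmp)
  then have "asc (Y \<odot> A) B A \<bullet> ((iv (asc Y A B) \<bullet> ((idm Y \<diamond> iv e) \<bullet> iv (ru Y))) \<diamond> idm A) =
      iv (asc Y A (B \<odot> A)) \<bullet> ((idm Y \<diamond> asc A B A) \<bullet>
        (asc Y (A \<odot> B) A \<bullet> (((idm Y \<diamond> iv e) \<diamond> idm A) \<bullet> (iv (ru Y) \<diamond> idm A))))"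
    using o e by (simp add: cmp_eq_extend[OF assoc_inv_pentagon[OF o]])
  also have "\<dots> = iv (asc Y A (B \<odot> A)) \<bullet> ((idm Y \<diamond> asc A B A) \<bullet>
        ((idm Y \<diamond> (iv e \<diamond> idm A)) \<bullet> (asc Y I A \<bullet> (iv (ru Y) \<diamond> idm A))))"
    using o e by (simp add: cmp_eq_extend[OF nat])
  also have "\<dots> = iv (asc Y A (B \<odot> A)) \<bullet> (idm Y \<diamond> (asc A B A \<bullet> ((iv e \<diamond> idm A) \<bullet> iv (lu A))))"
    using o e by (simp add: triangle_inv mtens_cmp)
  finally show ?thesis .
qed

text \<open>\<open>represents_id X C h\<close>: the pair \<open>(C, h)\<close> represents the identity \<open>[I, \<rho>\<^sup>-\<^sup>1]\<close> of
  \<open>X\<close> in \<open>P(M)\<close>.\<close>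

definition represents_id :: "'o \<Rightarrow> 'o \<Rightarrow> 'm \<Rightarrow> bool" where
  "represents_id X C h \<longleftrightarrow>
    (\<exists>\<alpha>. \<alpha> \<in> mor M \<and> src M \<alpha> = C \<and> tgt M \<alpha> = I \<and> is_iso \<alpha> \<and> (idm X \<diamond> \<alpha>) \<bullet> h = iv (ru X))"

lemma represents_id_inverse:
  assumes o: "X \<in> ob M" "Y \<in> ob M" "A \<in> ob M" "B \<in> ob M"
    and f: "f \<in> mor M" "src M f = X" "tgt M f = Y \<odot> A" "is_iso f"
    and e: "e \<in> mor M" "src M e = A \<odot> B" "tgt M e = I" "is_iso e"
    and \<alpha>: "\<alpha> \<in> mor M" "src M \<alpha> = B \<odot> A" "tgt M \<alpha> = I"
    and zigzag: "(idm A \<diamond> \<alpha>) \<bullet> (asc A B A \<bullet> ((iv e \<diamond> idm A) \<bullet> iv (lu A))) = iv (ru A)"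
    and g: "g = (iv f \<diamond> idm B) \<bullet> (iv (asc Y A B) \<bullet> ((idm Y \<diamond> iv e) \<bullet> iv (ru Y)))"
  shows "(idm X \<diamond> \<alpha>) \<bullet> (asc X B A \<bullet> ((g \<diamond> idm A) \<bullet> f)) = iv (ru X)"
proof -
  define G where "G = iv (asc Y A B) \<bullet> ((idm Y \<diamond> iv e) \<bullet> iv (ru Y))"
  define \<phi> where "\<phi> = asc A B A \<bullet> ((iv e \<diamond> idm A) \<bullet> iv (lu A))"
  have G: "G \<in> mor M" "src M G = Y" "tgt M G = Y \<odot> A \<odot> B" unfolding G_def using o e by simp_all
  have \<phi>: "\<phi> \<in> mor M" "src M \<phi> = A" "tgt M \<phi> = A \<odot> (B \<odot> A)" unfolding \<phi>_def using o e by simp_all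
  note facts = o f e \<alpha> G \<phi>
  have s1: "g \<diamond> idm A = ((iv f \<diamond> idm B) \<diamond> idm A) \<bullet> (G \<diamond> idm A)"
    unfolding g G_def[symmetric] using facts by (simp add: mtens_cmp)
  have s2: "asc X B A \<bullet> ((iv f \<diamond> idm B) \<diamond> idm A) = (iv f \<diamond> idm (B \<odot> A)) \<bullet> asc (Y \<odot> A) B A"
    using assoc_natural[of "iv f" "idm B" "idm A"] facts by simp
  have s3: "(idm X \<diamond> \<alpha>) \<bullet> (iv f \<diamond> idm (B \<odot> A)) = (iv f \<diamond> idm I) \<bullet> (idm (Y \<odot> A) \<diamond> \<alpha>)"
    using facts by (simp add: mtens_cmp)
  have s4: "asc (Y \<odot> A) B A \<bullet> (G \<diamond> idm A) = iv (asc Y A (B \<odot> A)) \<bullet> (idm Y \<diamond> \<phi>)"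
    unfolding G_def \<phi>_def by (rule assoc_unit_inverse[OF o(2-4) e])
  have "asc Y A I \<bullet> (idm (Y \<odot> A) \<diamond> \<alpha>) = (idm Y \<diamond> (idm A \<diamond> \<alpha>)) \<bullet> asc Y A (B \<odot> A)"
    using assoc_natural[of "idm Y" "idm A" \<alpha>] facts by simp
  then have s5: "iv (asc Y A I) \<bullet> (idm Y \<diamond> (idm A \<diamond> \<alpha>)) = (idm (Y \<odot> A) \<diamond> \<alpha>) \<bullet> iv (asc Y A (B \<odot> A))"
    by (rule iso_square_inv[rotated 8]) (use facts in simp_all)
  have "iv ((idm Y \<diamond> ru A) \<bullet> asc Y A I) = iv (ru (Y \<odot> A))" using runit_otens facts by simp
  then have s6: "iv (asc Y A I) \<bullet> (idm Y \<diamond> iv (ru A)) = iv (ru (Y \<odot> A))" using facts by simp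
  have "ru X \<bullet> (iv f \<diamond> idm I) = iv f \<bullet> ru (Y \<odot> A)" using runit_natural[of "iv f"] facts by simp
  then have s7: "iv (ru X) \<bullet> iv f = (iv f \<diamond> idm I) \<bullet> iv (ru (Y \<odot> A))"
    by (rule iso_square_inv[rotated 8]) (use facts in simp_all)
  have "(idm X \<diamond> \<alpha>) \<bullet> (asc X B A \<bullet> ((g \<diamond> idm A) \<bullet> f)) =
      (idm X \<diamond> \<alpha>) \<bullet> (asc X B A \<bullet> (((iv f \<diamond> idm B) \<diamond> idm A) \<bullet> ((G \<diamond> idm A) \<bullet> f)))"
    using s1 facts by simp
  also have "\<dots> = (iv f \<diamond> idm I) \<bullet> ((idm (Y \<odot> A) \<diamond> \<alpha>) \<bullet> (asc (Y \<odot> A) B A \<bullet> ((G \<diamond> idm A) \<bullet> f)))"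
    using facts by (simp add: cmp_eq_extend[OF s2] cmp_eq_extend[OF s3])
  also have "\<dots> = (iv f \<diamond> idm I) \<bullet> (iv (asc Y A I) \<bullet> ((idm Y \<diamond> (idm A \<diamond> \<alpha>)) \<bullet> ((idm Y \<diamond> \<phi>) \<bullet> f)))"
    using facts by (simp add: cmp_eq_extend[OF s4] cmp_eq_extend[OF s5[symmetric]])
  also have "\<dots> = (iv f \<diamond> idm I) \<bullet> (iv (asc Y A I) \<bullet> ((idm Y \<diamond> iv (ru A)) \<bullet> f))"
    using facts zigzag[folded \<phi>_def] by (simp add: mtens_cmp_extend)
  also have "\<dots> = iv (ru X) \<bullet> (iv f \<bullet> f)"
    using facts by (simp add: cmp_eq_extend1[OF s6] cmp_eq_extend[OF s7[symmetric]])
  also have "\<dots> = iv (ru X)" using facts by simp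
  finally show ?thesis .
qed

text \<open>For invertible \<open>f\<close>, the inverse of \<open>[A, f]\<close> is \<open>[B, g]\<close> with
  \<open>g = (f\<^sup>-\<^sup>1 \<otimes> B) \<circ> \<alpha>\<^sup>-\<^sup>1 \<circ> (Y \<otimes> e\<^sup>-\<^sup>1) \<circ> \<rho>\<^sup>-\<^sup>1\<close>: one composite is the identity by
  construction, the other by \<open>represents_id_inverse\<close>.\<close>

lemma represents_id_of_iso:
  assumes o: "X \<in> ob M" "Y \<in> ob M" and A: "wi A"
    and f: "f \<in> mor M" "src M f = X" "tgt M f = Y \<odot> A" "is_iso f"
  obtains B g where "wi B" "g \<in> mor M" "src M g = Y" "tgt M g = X \<odot> B"
    "represents_id X (B \<odot> A) (asc X B A \<bullet> ((g \<diamond> idm A) \<bullet> f))"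
    "represents_id Y (A \<odot> B) (asc Y A B \<bullet> ((f \<diamond> idm B) \<bullet> g))"
proof -
  obtain B e where B: "wi B" and e: "e \<in> mor M" "src M e = A \<odot> B" "tgt M e = I" "is_iso e"
    using A by (rule wi_inverseE)
  have oA: "A \<in> ob M" "B \<in> ob M" using A B wi_ob by auto
  obtain \<alpha> where \<alpha>: "\<alpha> \<in> mor M" "src M \<alpha> = B \<odot> A" "tgt M \<alpha> = I" "is_iso \<alpha>"
    and zigzag: "(idm A \<diamond> \<alpha>) \<bullet> (asc A B A \<bullet> ((iv e \<diamond> idm A) \<bullet> iv (lu A))) = iv (ru A)"
    using wi_zigzag[OF A oA(2) e] by blast
  define g where "g = (iv f \<diamond> idm B) \<bullet> (iv (asc Y A B) \<bullet> ((idm Y \<diamond> iv e) \<bullet> iv (ru Y)))"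
  have g: "g \<in> mor M" "src M g = Y" "tgt M g = X \<odot> B" unfolding g_def using o oA f e by simp_all
  have "(idm X \<diamond> \<alpha>) \<bullet> (asc X B A \<bullet> ((g \<diamond> idm A) \<bullet> f)) = iv (ru X)"
    by (rule represents_id_inverse[OF o oA f e \<alpha>(1-3) zigzag g_def])
  moreover have "(idm Y \<diamond> e) \<bullet> (asc Y A B \<bullet> ((f \<diamond> idm B) \<bullet> g)) = iv (ru Y)"
    unfolding g_def using o oA f e by (simp add: mtens_cmp_extend mtens_cmp)
  ultimately show ?thesis
    using that[OF B g] \<alpha> e unfolding represents_id_def by blast
qed

lemma represents_id_is_iso:
  assumes "represents_id X C h" "X \<in> ob M" "h \<in> mor M" "tgt M h = X \<odot> C"
  shows "is_iso h"
proof -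
  obtain \<alpha> where \<alpha>: "\<alpha> \<in> mor M" "src M \<alpha> = C" "tgt M \<alpha> = I" "is_iso \<alpha>"
    "(idm X \<diamond> \<alpha>) \<bullet> h = iv (ru X)" using assms(1) unfolding represents_id_def by blast
  have "h = iv (idm X \<diamond> \<alpha>) \<bullet> iv (ru X)"
    by (rule iso_cmp_eq_inv[OF _ _ _ \<alpha>(5)]) (use assms \<alpha> in simp_all)
  then show ?thesis using assms(2) \<alpha> by simp
qed

lemma iso_of_represents_id:
  assumes o: "X \<in> ob M" "Y \<in> ob M" "A \<in> ob M" "B \<in> ob M"
    and f: "f \<in> mor M" "src M f = X" "tgt M f = Y \<odot> A"
    and g: "g \<in> mor M" "src M g = Y" "tgt M g = X \<odot> B"
    and left: "represents_id X (B \<odot> A) (asc X B A \<bullet> ((g \<diamond> idm A) \<bullet> f))"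
    and right: "represents_id Y (A \<odot> B) (asc Y A B \<bullet> ((f \<diamond> idm B) \<bullet> g))"
  shows "is_iso f"
proof -
  obtain \<alpha> where \<alpha>: "\<alpha> \<in> mor M" "src M \<alpha> = B \<odot> A" "tgt M \<alpha> = I" "is_iso \<alpha>"
    and E: "(idm X \<diamond> \<alpha>) \<bullet> (asc X B A \<bullet> ((g \<diamond> idm A) \<bullet> f)) = iv (ru X)"
    using left unfolding represents_id_def by blast
  note facts = o f g \<alpha>
  have "is_iso (asc Y A B \<bullet> ((f \<diamond> idm B) \<bullet> g))"
    by (rule represents_id_is_iso[OF right]) (use facts in simp_all)
  then have fg: "is_iso ((f \<diamond> idm B) \<bullet> g)"
    using is_iso_cmp[of "asc Y A B \<bullet> ((f \<diamond> idm B) \<bullet> g)" "iv (asc Y A B)"] facts by simp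
  \<comment> \<open>a left inverse of \<open>f\<close>, with \<open>f \<circ> k\<close> invertible because \<open>(f \<otimes> B) \<circ> g\<close> is\<close>
  define k where "k = ru X \<bullet> ((idm X \<diamond> \<alpha>) \<bullet> (asc X B A \<bullet> (g \<diamond> idm A)))"
  have k: "k \<in> mor M" "src M k = Y \<odot> A" "tgt M k = X" unfolding k_def using facts by simp_all
  have kf: "k \<bullet> f = idm X" unfolding k_def using E facts by simp
  have n1: "ru (Y \<odot> A) \<bullet> (f \<diamond> idm I) = f \<bullet> ru X" using runit_natural[of f] facts by simp
  have n2: "(f \<diamond> idm I) \<bullet> (idm X \<diamond> \<alpha>) = (idm (Y \<odot> A) \<diamond> \<alpha>) \<bullet> (f \<diamond> idm (B \<odot> A))"
    using facts by (simp add: mtens_cmp)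
  have n3: "(f \<diamond> idm (B \<odot> A)) \<bullet> asc X B A = asc (Y \<odot> A) B A \<bullet> ((f \<diamond> idm B) \<diamond> idm A)"
    using assoc_natural[of f "idm B" "idm A"] facts by simp
  have "f \<bullet> k = (f \<bullet> ru X) \<bullet> ((idm X \<diamond> \<alpha>) \<bullet> (asc X B A \<bullet> (g \<diamond> idm A)))"
    unfolding k_def using facts by simp
  also have "\<dots> = ru (Y \<odot> A) \<bullet> ((f \<diamond> idm I) \<bullet> ((idm X \<diamond> \<alpha>) \<bullet> (asc X B A \<bullet> (g \<diamond> idm A))))"
    unfolding n1[symmetric] using facts by simp
  also have "\<dots> = ru (Y \<odot> A) \<bullet>
      ((idm (Y \<odot> A) \<diamond> \<alpha>) \<bullet> (asc (Y \<odot> A) B A \<bullet> (((f \<diamond> idm B) \<diamond> idm A) \<bullet> (g \<diamond> idm A))))"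
    using facts by (simp add: cmp_eq_extend[OF n2] cmp_eq_extend[OF n3])
  also have "\<dots> = ru (Y \<odot> A) \<bullet>
      ((idm (Y \<odot> A) \<diamond> \<alpha>) \<bullet> (asc (Y \<odot> A) B A \<bullet> (((f \<diamond> idm B) \<bullet> g) \<diamond> idm A)))"
    using facts by (simp add: mtens_cmp)
  finally have "is_iso (f \<bullet> k)" using fg facts by simp
  then show ?thesis using is_iso_if_left_inverse[OF f(1) k(1)] k kf f by simp
qed

lemma Pcls_mem: "(A', f') \<in> Pcls M X Y A f \<longleftrightarrow>
    wi A' \<and> f' \<in> mor M \<and> src M f' = X \<and> tgt M f' = Y \<odot> A' \<and>
    (\<exists>\<alpha>. \<alpha> \<in> mor M \<and> src M \<alpha> = A \<and> tgt M \<alpha> = A' \<and> is_iso \<alpha> \<and> (idm Y \<diamond> \<alpha>) \<bullet> f = f')"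
  unfolding Pcls_def hom_in_def by auto

lemma Pcls_refl: assumes "wi A" "Y \<in> ob M" "f \<in> mor M" "src M f = X" "tgt M f = Y \<odot> A"
  shows "(A, f) \<in> Pcls M X Y A f"
  unfolding Pcls_mem using assms wi_ob[OF assms(1)] by (intro conjI exI[of _ "idm A"]) simp_all

lemma Pcls_eq:
  assumes A: "wi A" and o: "Y \<in> ob M" and f: "f \<in> mor M" "src M f = X" "tgt M f = Y \<odot> A"
    and m: "(A', f') \<in> Pcls M X Y A f"
  shows "Pcls M X Y A' f' = Pcls M X Y A f"
proof -
  obtain \<alpha> where a: "\<alpha> \<in> mor M" "src M \<alpha> = A" "tgt M \<alpha> = A'" "is_iso \<alpha>" "(idm Y \<diamond> \<alpha>) \<bullet> f = f'"
    and A': "wi A'" using m unfolding Pcls_mem by blast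
  have oA: "A \<in> ob M" "A' \<in> ob M" using A A' wi_ob by auto
  have "\<forall>A'' f''. ((A'', f'') \<in> Pcls M X Y A' f') = ((A'', f'') \<in> Pcls M X Y A f)"
  proof (intro allI)
    fix A'' f''
    show "((A'', f'') \<in> Pcls M X Y A' f') = ((A'', f'') \<in> Pcls M X Y A f)"
    proof
      assume "(A'', f'') \<in> Pcls M X Y A' f'"
      then obtain \<beta> where b: "\<beta> \<in> mor M" "src M \<beta> = A'" "tgt M \<beta> = A''" "is_iso \<beta>"
          "(idm Y \<diamond> \<beta>) \<bullet> f' = f''"
        and r: "wi A''" "f'' \<in> mor M" "src M f'' = X" "tgt M f'' = Y \<odot> A''" unfolding Pcls_mem by blast
      have "(idm Y \<diamond> (\<beta> \<bullet> \<alpha>)) \<bullet> f = f''"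
        unfolding b(5)[symmetric] a(5)[symmetric] using a(1-4) b(1-4) o f
        by (simp add: mtens_cmp_extend)
      then show "(A'', f'') \<in> Pcls M X Y A f" unfolding Pcls_mem using r a b
        by (intro conjI exI[of _ "\<beta> \<bullet> \<alpha>"]) simp_all
    next
      assume "(A'', f'') \<in> Pcls M X Y A f"
      then obtain \<beta> where b: "\<beta> \<in> mor M" "src M \<beta> = A" "tgt M \<beta> = A''" "is_iso \<beta>"
          "(idm Y \<diamond> \<beta>) \<bullet> f = f''"
        and r: "wi A''" "f'' \<in> mor M" "src M f'' = X" "tgt M f'' = Y \<odot> A''" unfolding Pcls_mem by blast
      have "(idm Y \<diamond> (\<beta> \<bullet> iv \<alpha>)) \<bullet> f' = f''"
        unfolding b(5)[symmetric] a(5)[symmetric] using a(1-4) b(1-4) o f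
        by (simp add: mtens_cmp_extend)
      then show "(A'', f'') \<in> Pcls M X Y A' f'" unfolding Pcls_mem using r a b
        by (intro conjI exI[of _ "\<beta> \<bullet> iv \<alpha>"]) simp_all
    qed
  qed
  then show ?thesis by (simp add: set_eq_iff split_paired_All)
qed

lemma Pcls_eq_iff:
  assumes "wi A" "Y \<in> ob M" "f \<in> mor M" "src M f = X" "tgt M f = Y \<odot> A"
    and "wi A'" "f' \<in> mor M" "src M f' = X" "tgt M f' = Y \<odot> A'"
  shows "Pcls M X Y A' f' = Pcls M X Y A f \<longleftrightarrow> (A', f') \<in> Pcls M X Y A f"
  using Pcls_refl[OF assms(6,2,7,8,9)] Pcls_eq[OF assms(1-5)] by blast

lemma rep_mem: "c \<noteq> {} \<Longrightarrow> rep c \<in> c"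
  unfolding rep_def by (rule someI_ex) blast

lemma rep_Pcls:
  assumes "wi A" "Y \<in> ob M" "f \<in> mor M" "src M f = X" "tgt M f = Y \<odot> A"
  shows "rep (Pcls M X Y A f) \<in> Pcls M X Y A f"
  using rep_mem Pcls_refl[OF assms] by blast

lemma Pcls_cmp:
  assumes o: "Y \<in> ob M" "Z \<in> ob M" "A \<in> ob M" "B \<in> ob M"
    and f: "f \<in> mor M" "src M f = X" "tgt M f = Y \<odot> A"
    and g: "g \<in> mor M" "src M g = Y" "tgt M g = Z \<odot> B"
    and mf: "(A', f') \<in> Pcls M X Y A f" and mg: "(B', g') \<in> Pcls M Y Z B g"
  shows "(B' \<odot> A', asc Z B' A' \<bullet> ((g' \<diamond> idm A') \<bullet> f')) \<in>
    Pcls M X Z (B \<odot> A) (asc Z B A \<bullet> ((g \<diamond> idm A) \<bullet> f))"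
proof -
  obtain \<alpha> where \<alpha>: "\<alpha> \<in> mor M" "src M \<alpha> = A" "tgt M \<alpha> = A'" "is_iso \<alpha>" "(idm Y \<diamond> \<alpha>) \<bullet> f = f'"
    and A': "wi A'" using mf unfolding Pcls_mem by blast
  obtain \<beta> where \<beta>: "\<beta> \<in> mor M" "src M \<beta> = B" "tgt M \<beta> = B'" "is_iso \<beta>" "(idm Z \<diamond> \<beta>) \<bullet> g = g'"
    and B': "wi B'" using mg unfolding Pcls_mem by blast
  have oA': "A' \<in> ob M" "B' \<in> ob M" using A' B' wi_ob by auto
  note facts = o oA' f g \<alpha>(1-4) \<beta>(1-4)
  have n: "asc Z B' A' \<bullet> ((idm Z \<diamond> \<beta>) \<diamond> \<alpha>) = (idm Z \<diamond> (\<beta> \<diamond> \<alpha>)) \<bullet> asc Z B A"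
    using assoc_natural[of "idm Z" \<beta> \<alpha>] facts by simp
  have "asc Z B' A' \<bullet> ((g' \<diamond> idm A') \<bullet> f') =
      asc Z B' A' \<bullet> ((((idm Z \<diamond> \<beta>) \<bullet> g) \<diamond> idm A') \<bullet> ((idm Y \<diamond> \<alpha>) \<bullet> f))"
    using \<alpha>(5) \<beta>(5) by simp
  also have "\<dots> = asc Z B' A' \<bullet> (((idm Z \<diamond> \<beta>) \<diamond> \<alpha>) \<bullet> ((g \<diamond> idm A) \<bullet> f))"
    using facts by (simp add: mtens_cmp_extend)
  also have "\<dots> = (idm Z \<diamond> (\<beta> \<diamond> \<alpha>)) \<bullet> (asc Z B A \<bullet> ((g \<diamond> idm A) \<bullet> f))"
    by (rule cmp_eq_extend[OF n]) (use facts in simp_all)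
  finally show ?thesis
    unfolding Pcls_mem using facts wi_otens[OF B' A']
    by (intro conjI exI[of _ "\<beta> \<diamond> \<alpha>"]) (simp_all del: cmp_assoc)
qed

lemma Pcmp_Pcls:
  assumes o: "X \<in> ob M" "Y \<in> ob M" "Z \<in> ob M" and A: "wi A" and B: "wi B"
    and f: "f \<in> mor M" "src M f = X" "tgt M f = Y \<odot> A"
    and g: "g \<in> mor M" "src M g = Y" "tgt M g = Z \<odot> B"
  shows "Pcmp M (Y, Z, Pcls M Y Z B g) (X, Y, Pcls M X Y A f) =
    (X, Z, Pcls M X Z (B \<odot> A) (asc Z B A \<bullet> ((g \<diamond> idm A) \<bullet> f)))"
proof -
  obtain A' f' where rf: "rep (Pcls M X Y A f) = (A', f')" by fastforce
  obtain B' g' where rg: "rep (Pcls M Y Z B g) = (B', g')" by fastforce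
  have oA: "A \<in> ob M" "B \<in> ob M" using A B wi_ob by auto
  have "(B' \<odot> A', asc Z B' A' \<bullet> ((g' \<diamond> idm A') \<bullet> f')) \<in>
      Pcls M X Z (B \<odot> A) (asc Z B A \<bullet> ((g \<diamond> idm A) \<bullet> f))"
    using rep_Pcls[OF A o(2) f] rep_Pcls[OF B o(3) g] rf rg
    by (intro Pcls_cmp[OF o(2,3) oA f g]) simp_all
  then show ?thesis
    unfolding Pcmp_def Let_def using rf rg Pcls_eq[OF wi_otens[OF B A] o(3)] o oA f g by simp
qed

lemma Pmor_iff: "p \<in> Pmor M \<longleftrightarrow> (\<exists>X Y A f. p = (X, Y, Pcls M X Y A f) \<and>
    X \<in> ob M \<and> Y \<in> ob M \<and> wi A \<and> f \<in> mor M \<and> src M f = X \<and> tgt M f = Y \<odot> A)"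
  unfolding Pmor_def hom_in_def by auto

lemma PCat_simps: "ob (PCat M) = ob M" "mor (PCat M) = Pmor M" "src (PCat M) = fst"
  "tgt (PCat M) = (\<lambda>p. fst (snd p))" "cmp (PCat M) = Pcmp M" "ident (PCat M) = Pid M"
  "otens (PCat M) = otens M"
  unfolding PCat_def by simp_all

lemma Pid_Pcls: "Pid M X = (X, X, Pcls M X X I (iv (ru X)))"
  unfolding Pid_def by simp

lemma Pcmp_eq_Pid_iff:
  assumes o: "X \<in> ob M" "Y \<in> ob M" and A: "wi A" and B: "wi B"
    and f: "f \<in> mor M" "src M f = X" "tgt M f = Y \<odot> A"
    and g: "g \<in> mor M" "src M g = Y" "tgt M g = X \<odot> B"
  shows "Pcmp M (Y, X, Pcls M Y X B g) (X, Y, Pcls M X Y A f) = Pid M X \<longleftrightarrow>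
    represents_id X (B \<odot> A) (asc X B A \<bullet> ((g \<diamond> idm A) \<bullet> f))"
proof -
  have oA: "A \<in> ob M" "B \<in> ob M" using A B wi_ob by auto
  have "Pcls M X X I (iv (ru X)) = Pcls M X X (B \<odot> A) (asc X B A \<bullet> ((g \<diamond> idm A) \<bullet> f)) \<longleftrightarrow>
      (I, iv (ru X)) \<in> Pcls M X X (B \<odot> A) (asc X B A \<bullet> ((g \<diamond> idm A) \<bullet> f))"
    by (rule Pcls_eq_iff[OF wi_otens[OF B A] o(1)]) (use o oA f g wi_unit in simp_all)
  also have "\<dots> \<longleftrightarrow> represents_id X (B \<odot> A) (asc X B A \<bullet> ((g \<diamond> idm A) \<bullet> f))"
    unfolding Pcls_mem represents_id_def using o wi_unit by (auto simp del: cmp_assoc)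
  finally show ?thesis
    unfolding Pcmp_Pcls[OF o(1,2,1) A B f g] Pid_Pcls by auto
qed

lemma iso_in_PCat_iff:
  assumes o: "X \<in> ob M" "Y \<in> ob M" and A: "wi A" and f: "f \<in> mor M" "src M f = X" "tgt M f = Y \<odot> A"
  shows "iso_in (PCat M) (X, Y, Pcls M X Y A f) \<longleftrightarrow> is_iso f"
proof
  assume "iso_in (PCat M) (X, Y, Pcls M X Y A f)"
  then obtain q where q: "q \<in> Pmor M" "fst q = Y" "fst (snd q) = X"
    and qp: "Pcmp M q (X, Y, Pcls M X Y A f) = Pid M X"
    and pq: "Pcmp M (X, Y, Pcls M X Y A f) q = Pid M Y"
    unfolding iso_in_def PCat_simps by auto
  then obtain B g where qBg: "q = (Y, X, Pcls M Y X B g)" and B: "wi B"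
    and g: "g \<in> mor M" "src M g = Y" "tgt M g = X \<odot> B"
    unfolding Pmor_iff by auto
  have oA: "A \<in> ob M" "B \<in> ob M" using A B wi_ob by auto
  show "is_iso f"
    using qp pq Pcmp_eq_Pid_iff[OF o A B f g] Pcmp_eq_Pid_iff[OF o(2,1) B A g f]
    by (intro iso_of_represents_id[OF o oA f g]) (simp_all add: qBg)
next
  assume "is_iso f"
  then obtain B g where B: "wi B" and g: "g \<in> mor M" "src M g = Y" "tgt M g = X \<odot> B"
    and reps: "represents_id X (B \<odot> A) (asc X B A \<bullet> ((g \<diamond> idm A) \<bullet> f))"
      "represents_id Y (A \<odot> B) (asc Y A B \<bullet> ((f \<diamond> idm B) \<bullet> g))"
    using represents_id_of_iso[OF o A f] by blast
  have "(Y, X, Pcls M Y X B g) \<in> Pmor M" "(X, Y, Pcls M X Y A f) \<in> Pmor M"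
    unfolding Pmor_iff using o A B f g by blast+
  then show "iso_in (PCat M) (X, Y, Pcls M X Y A f)"
    unfolding iso_in_def PCat_simps
    using reps Pcmp_eq_Pid_iff[OF o A B f g] Pcmp_eq_Pid_iff[OF o(2,1) B A g f]
    by (intro conjI bexI[of _ "(Y, X, Pcls M Y X B g)"]) simp_all
qed

text \<open>The relation whose classes form \<open>K(M)/U(K(M))\<close>.\<close>

definition pic_equiv :: "'o \<Rightarrow> 'o \<Rightarrow> bool" where
  "pic_equiv X Y \<longleftrightarrow> X \<in> ob M \<and> Y \<in> ob M \<and> (\<exists>A. wi A \<and> isomorphic M X (Y \<odot> A))"

lemma isomorphic_PCat_iff: "isomorphic (PCat M) X Y \<longleftrightarrow> pic_equiv X Y"
proof
  assume "isomorphic (PCat M) X Y"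
  then obtain p where "hom_in (PCat M) p X Y" "iso_in (PCat M) p"
    unfolding isomorphic_def by blast
  then obtain A f where "X \<in> ob M" "Y \<in> ob M" "wi A" "f \<in> mor M" "src M f = X" "tgt M f = Y \<odot> A"
    "iso_in (PCat M) (X, Y, Pcls M X Y A f)"
    unfolding hom_in_def PCat_simps Pmor_iff by auto
  then show "pic_equiv X Y"
    unfolding pic_equiv_def using iso_in_PCat_iff isomorphicI by blast
next
  assume "pic_equiv X Y"
  then obtain A f where o: "X \<in> ob M" "Y \<in> ob M" and A: "wi A"
    and f: "f \<in> mor M" "src M f = X" "tgt M f = Y \<odot> A" "is_iso f"
    unfolding pic_equiv_def by (auto elim: isomorphicE)
  have "(X, Y, Pcls M X Y A f) \<in> Pmor M" unfolding Pmor_iff using o A f by blast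
  then have "hom_in (PCat M) (X, Y, Pcls M X Y A f) X Y" "iso_in (PCat M) (X, Y, Pcls M X Y A f)"
    unfolding hom_in_def PCat_simps using iso_in_PCat_iff[OF o A f(1-3)] f(4) by simp_all
  then show "isomorphic (PCat M) X Y" unfolding isomorphic_def by blast
qed

lemma pic_equiv_ob: "pic_equiv X Y \<Longrightarrow> X \<in> ob M \<and> Y \<in> ob M"
  unfolding pic_equiv_def by blast

lemma pic_equiv_of_isomorphic: "isomorphic M X Y \<Longrightarrow> pic_equiv X Y"
  unfolding pic_equiv_def
  using wi_unit isomorphic_trans[OF _ isomorphic_sym[OF isomorphic_runit]] isomorphic_ob by blast

lemma pic_equiv_refl: "X \<in> ob M \<Longrightarrow> pic_equiv X X"
  using pic_equiv_of_isomorphic isomorphic_refl by blast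

lemma pic_equiv_sym: assumes "pic_equiv X Y" shows "pic_equiv Y X"
proof -
  obtain A where A: "wi A" "isomorphic M X (Y \<odot> A)" and o: "X \<in> ob M" "Y \<in> ob M"
    using assms unfolding pic_equiv_def by blast
  obtain B where B: "wi B" "isomorphic M (A \<odot> B) I" using A(1) by (rule wi_invE)
  have oA: "A \<in> ob M" "B \<in> ob M" using A B wi_ob by auto
  have "isomorphic M Y (Y \<odot> I)" using isomorphic_sym[OF isomorphic_runit] o by blast
  also have "isomorphic M \<dots> (Y \<odot> (A \<odot> B))"
    by (rule isomorphic_otens[OF isomorphic_refl[OF o(2)] isomorphic_sym[OF B(2)]])
  also have "isomorphic M \<dots> ((Y \<odot> A) \<odot> B)"
    by (rule isomorphic_sym[OF isomorphic_assoc]) (use o oA in auto)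
  also have "isomorphic M \<dots> (X \<odot> B)"
    by (rule isomorphic_otens[OF isomorphic_sym[OF A(2)] isomorphic_refl[OF oA(2)]])
  finally show ?thesis unfolding pic_equiv_def using o B(1) by blast
qed

lemma pic_equiv_trans: assumes "pic_equiv X Y" "pic_equiv Y Z" shows "pic_equiv X Z"
proof -
  obtain A where A: "wi A" "isomorphic M X (Y \<odot> A)" and o: "X \<in> ob M"
    using assms(1) unfolding pic_equiv_def by blast
  obtain B where B: "wi B" "isomorphic M Y (Z \<odot> B)" and oZ: "Z \<in> ob M"
    using assms(2) unfolding pic_equiv_def by blast
  have oA: "A \<in> ob M" "B \<in> ob M" using A B wi_ob by auto
  have "isomorphic M X ((Z \<odot> B) \<odot> A)"
    by (rule isomorphic_trans[OF A(2) isomorphic_otens[OF B(2) isomorphic_refl[OF oA(1)]]])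
  also have "isomorphic M \<dots> (Z \<odot> (B \<odot> A))" by (rule isomorphic_assoc) (use oZ oA in auto)
  finally show ?thesis unfolding pic_equiv_def using o oZ wi_otens[OF B(1) A(1)] by blast
qed

lemma pic_equiv_otens:
  assumes "pic_equiv X X'" "pic_equiv Y Y'" shows "pic_equiv (X \<odot> Y) (X' \<odot> Y')"
proof -
  obtain A where A: "wi A" "isomorphic M X (X' \<odot> A)" and o: "X \<in> ob M" "X' \<in> ob M"
    using assms(1) unfolding pic_equiv_def by blast
  obtain B where B: "wi B" "isomorphic M Y (Y' \<odot> B)" and o': "Y \<in> ob M" "Y' \<in> ob M"
    using assms(2) unfolding pic_equiv_def by blast
  have oA: "A \<in> ob M" "B \<in> ob M" using A B wi_ob by auto
  have "isomorphic M (X \<odot> Y) ((X' \<odot> A) \<odot> (Y' \<odot> B))" by (rule isomorphic_otens[OF A(2) B(2)])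
  also have "isomorphic M \<dots> ((X' \<odot> Y') \<odot> (A \<odot> B))" by (rule isomorphic_middle_four) (use o o' oA in auto)
  finally show ?thesis unfolding pic_equiv_def using o o' wi_otens[OF A(1) B(1)] by auto
qed

lemma iso_congruence_PCat: "iso_congruence (PCat M)"
proof unfold_locales
  fix X X' Y Y' Z
  show "isomorphic (PCat M) X Y \<Longrightarrow> X \<in> ob (PCat M) \<and> Y \<in> ob (PCat M)"
    unfolding isomorphic_PCat_iff PCat_simps by (rule pic_equiv_ob)
  show "X \<in> ob (PCat M) \<Longrightarrow> isomorphic (PCat M) X X"
    unfolding isomorphic_PCat_iff PCat_simps by (rule pic_equiv_refl)
  show "isomorphic (PCat M) X Y \<Longrightarrow> isomorphic (PCat M) Y X"
    unfolding isomorphic_PCat_iff by (rule pic_equiv_sym)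
  show "isomorphic (PCat M) X Y \<Longrightarrow> isomorphic (PCat M) Y Z \<Longrightarrow> isomorphic (PCat M) X Z"
    unfolding isomorphic_PCat_iff by (rule pic_equiv_trans)
  show "X \<in> ob (PCat M) \<Longrightarrow> Y \<in> ob (PCat M) \<Longrightarrow> otens (PCat M) X Y \<in> ob (PCat M)"
    unfolding PCat_simps by simp
  show "isomorphic (PCat M) X X' \<Longrightarrow> isomorphic (PCat M) Y Y' \<Longrightarrow>
      isomorphic (PCat M) (otens (PCat M) X Y) (otens (PCat M) X' Y')"
    unfolding isomorphic_PCat_iff PCat_simps by (rule pic_equiv_otens)
qed

sublocale P: iso_congruence "PCat M" by (fact iso_congruence_PCat)

section \<open>The units of \<open>K(M)\<close> and the quotient by them\<close>

lemma Units_Kmon: "Units (Kmon M) = iso_class M ` {A. wi A}"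
proof
  show "Units (Kmon M) \<subseteq> iso_class M ` {A. wi A}"
  proof
    fix y assume "y \<in> Units (Kmon M)"
    then obtain x where "x \<in> carrier (Kmon M)" "y \<in> carrier (Kmon M)"
      "x \<otimes>\<^bsub>Kmon M\<^esub> y = \<one>\<^bsub>Kmon M\<^esub>" "y \<otimes>\<^bsub>Kmon M\<^esub> x = \<one>\<^bsub>Kmon M\<^esub>"
      unfolding Units_def by blast
    then obtain Y Z where YZ: "Y \<in> ob M" "Z \<in> ob M" "y = iso_class M Y"
      and "iso_class M (Z \<odot> Y) = iso_class M I" "iso_class M (Y \<odot> Z) = iso_class M I"
      unfolding K.Kmon_carrier by (auto simp: K.Kmon_mult K.Kmon_one)
    then have "isomorphic M (Z \<odot> Y) I" "isomorphic M (Y \<odot> Z) I" using K.iso_class_eq_iff by simp_all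
    then show "y \<in> iso_class M ` {A. wi A}" unfolding wi_iff using YZ by blast
  qed
next
  show "iso_class M ` {A. wi A} \<subseteq> Units (Kmon M)"
  proof
    fix y assume "y \<in> iso_class M ` {A. wi A}"
    then obtain A where A: "wi A" "y = iso_class M A" by blast
    obtain B where B: "wi B" "isomorphic M (A \<odot> B) I" "isomorphic M (B \<odot> A) I" using A(1) by (rule wi_invE)
    have o: "A \<in> ob M" "B \<in> ob M" using A B wi_ob by auto
    have "iso_class M B \<otimes>\<^bsub>Kmon M\<^esub> y = \<one>\<^bsub>Kmon M\<^esub>" "y \<otimes>\<^bsub>Kmon M\<^esub> iso_class M B = \<one>\<^bsub>Kmon M\<^esub>"
      using A o B by (simp_all add: K.Kmon_mult K.Kmon_one K.iso_class_eqI)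
    moreover have "y \<in> carrier (Kmon M)" "iso_class M B \<in> carrier (Kmon M)"
      unfolding K.Kmon_carrier using A o by auto
    ultimately show "y \<in> Units (Kmon M)" unfolding Units_def by blast
  qed
qed

lemma Ucls_Kmon:
  assumes X: "X \<in> ob M" shows "Ucls (Kmon M) (iso_class M X) = iso_class M ` {Z. pic_equiv Z X}"
proof
  show "Ucls (Kmon M) (iso_class M X) \<subseteq> iso_class M ` {Z. pic_equiv Z X}"
  proof
    fix y assume "y \<in> Ucls (Kmon M) (iso_class M X)"
    then obtain U where U: "wi U" "y = iso_class M U \<otimes>\<^bsub>Kmon M\<^esub> iso_class M X"
      unfolding Ucls_def Units_Kmon by blast
    have oU: "U \<in> ob M" using U wi_ob by auto
    have "pic_equiv (U \<odot> X) X" unfolding pic_equiv_def using U oU X isomorphic_braid by auto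
    moreover have "y = iso_class M (U \<odot> X)" using U oU X by (simp add: K.Kmon_mult)
    ultimately show "y \<in> iso_class M ` {Z. pic_equiv Z X}" by blast
  qed
next
  show "iso_class M ` {Z. pic_equiv Z X} \<subseteq> Ucls (Kmon M) (iso_class M X)"
  proof
    fix y assume "y \<in> iso_class M ` {Z. pic_equiv Z X}"
    then obtain Z A where y: "y = iso_class M Z" and oZ: "Z \<in> ob M"
      and A: "wi A" "isomorphic M Z (X \<odot> A)" unfolding pic_equiv_def by blast
    have oA: "A \<in> ob M" using A wi_ob by auto
    have "isomorphic M Z (A \<odot> X)" using isomorphic_trans[OF A(2) isomorphic_braid[OF X oA]] .
    then have "y = iso_class M A \<otimes>\<^bsub>Kmon M\<^esub> iso_class M X"
      using y oA X by (simp add: K.Kmon_mult K.iso_class_eqI)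
    moreover have "iso_class M A \<in> Units (Kmon M)" unfolding Units_Kmon using A by blast
    moreover have "y \<in> carrier (Kmon M)" unfolding K.Kmon_carrier using y oZ by blast
    ultimately show "y \<in> Ucls (Kmon M) (iso_class M X)" unfolding Ucls_def by blast
  qed
qed

lemma Ucls_eq_iff: assumes "X \<in> ob M" "Y \<in> ob M"
  shows "Ucls (Kmon M) (iso_class M X) = Ucls (Kmon M) (iso_class M Y) \<longleftrightarrow> pic_equiv X Y"
proof
  assume "Ucls (Kmon M) (iso_class M X) = Ucls (Kmon M) (iso_class M Y)"
  then have "iso_class M X \<in> iso_class M ` {Z. pic_equiv Z Y}"
    using Ucls_Kmon assms pic_equiv_refl by blast
  then obtain Z where Z: "pic_equiv Z Y" "iso_class M X = iso_class M Z" by blast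
  then have "pic_equiv X Z" using K.iso_class_eq_iff assms pic_equiv_of_isomorphic by blast
  then show "pic_equiv X Y" using Z pic_equiv_trans by blast
next
  assume "pic_equiv X Y"
  then have "{Z. pic_equiv Z X} = {Z. pic_equiv Z Y}" using pic_equiv_trans pic_equiv_sym by blast
  then show "Ucls (Kmon M) (iso_class M X) = Ucls (Kmon M) (iso_class M Y)"
    using Ucls_Kmon assms by simp
qed

lemma some_in_Ucls: assumes "X \<in> ob M"
  obtains Z where "(SOME a. a \<in> Ucls (Kmon M) (iso_class M X)) = iso_class M Z" "pic_equiv Z X"
proof -
  have "iso_class M X \<in> Ucls (Kmon M) (iso_class M X)"
    using Ucls_Kmon assms pic_equiv_refl by blast
  then have "(SOME a. a \<in> Ucls (Kmon M) (iso_class M X)) \<in> Ucls (Kmon M) (iso_class M X)"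
    by (rule someI)
  then show ?thesis using that Ucls_Kmon assms by auto
qed

lemma Umod_mult: assumes "X \<in> ob M" "Y \<in> ob M"
  shows "Ucls (Kmon M) (iso_class M X) \<otimes>\<^bsub>Umod (Kmon M)\<^esub> Ucls (Kmon M) (iso_class M Y) =
    Ucls (Kmon M) (iso_class M (X \<odot> Y))"
proof -
  obtain Z where Z: "(SOME a. a \<in> Ucls (Kmon M) (iso_class M X)) = iso_class M Z" "pic_equiv Z X"
    using some_in_Ucls assms(1) by blast
  obtain W where W: "(SOME a. a \<in> Ucls (Kmon M) (iso_class M Y)) = iso_class M W" "pic_equiv W Y"
    using some_in_Ucls assms(2) by blast
  have o: "Z \<in> ob M" "W \<in> ob M" using Z W pic_equiv_ob by auto
  have "Ucls (Kmon M) (iso_class M X) \<otimes>\<^bsub>Umod (Kmon M)\<^esub> Ucls (Kmon M) (iso_class M Y) =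
      Ucls (Kmon M) (iso_class M (Z \<odot> W))"
    unfolding Umod_def using Z W o by (simp add: K.Kmon_mult)
  also have "\<dots> = Ucls (Kmon M) (iso_class M (X \<odot> Y))"
    using Ucls_eq_iff o assms pic_equiv_otens[OF Z(2) W(2)] by simp
  finally show ?thesis .
qed

lemma Kmap_PicCat_iso_units: "Kmap (PicCat M) M id \<in> iso (Kmon (PicCat M)) (units_of (Kmon M))"
proof (rule Kmap_iso[OF iso_congruence_PicCat iso_congruence_M, where S = "{A. wi A}"])
  show "carrier (units_of (Kmon M)) = iso_class M ` {A. wi A}"
    unfolding units_of_def using Units_Kmon by simp
  show "mult (units_of (Kmon M)) = mult (Kmon M)"
    unfolding units_of_def by simp
qed (auto simp: isomorphic_PicCat_iff PicCat_simps wi_ob isomorphic_refl)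

lemma pic_equiv_some_in_PCat_class: assumes "X \<in> ob M"
  shows "pic_equiv (SOME Y. Y \<in> iso_class (PCat M) X) X"
  using P.some_in_iso_class[of X] assms pic_equiv_sym unfolding PCat_simps isomorphic_PCat_iff
  by blast

lemma Ucls_Kmap_PCat:
  assumes "X \<in> ob M"
  shows "Ucls (Kmon M) (Kmap (PCat M) M id (iso_class (PCat M) X)) = Ucls (Kmon M) (iso_class M X)"
  unfolding Kmap_def id_apply
  using Ucls_eq_iff pic_equiv_some_in_PCat_class[OF assms] assms pic_equiv_ob by blast

lemma Kmon_PCat_iso_Umod:
  "(\<lambda>c. Ucls (Kmon M) (Kmap (PCat M) M id c)) \<in> iso (Kmon (PCat M)) (Umod (Kmon M))"
  (is "?\<psi> \<in> iso _ _")
proof -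
  have carrier_P: "carrier (Kmon (PCat M)) = iso_class (PCat M) ` ob M"
    using P.Kmon_carrier unfolding PCat_simps .
  have carrier_U: "carrier (Umod (Kmon M)) = (\<lambda>X. Ucls (Kmon M) (iso_class M X)) ` ob M"
    unfolding Umod_def K.Kmon_carrier by (simp add: image_image)
  have "?\<psi> \<in> hom (Kmon (PCat M)) (Umod (Kmon M))"
  proof (rule homI)
    fix x assume "x \<in> carrier (Kmon (PCat M))"
    then show "?\<psi> x \<in> carrier (Umod (Kmon M))"
      unfolding carrier_P carrier_U using Ucls_Kmap_PCat by auto
  next
    fix x y assume "x \<in> carrier (Kmon (PCat M))" "y \<in> carrier (Kmon (PCat M))"
    then obtain X Y where XY: "X \<in> ob M" "Y \<in> ob M"
      "x = iso_class (PCat M) X" "y = iso_class (PCat M) Y"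
      unfolding carrier_P by blast
    then have "x \<otimes>\<^bsub>Kmon (PCat M)\<^esub> y = iso_class (PCat M) (X \<odot> Y)"
      using P.Kmon_mult[of X Y] unfolding PCat_simps by simp
    then show "?\<psi> (x \<otimes>\<^bsub>Kmon (PCat M)\<^esub> y) = ?\<psi> x \<otimes>\<^bsub>Umod (Kmon M)\<^esub> ?\<psi> y"
      using XY by (simp add: Ucls_Kmap_PCat Umod_mult)
  qed
  moreover have "inj_on ?\<psi> (carrier (Kmon (PCat M)))"
  proof (rule inj_onI)
    fix x y assume "x \<in> carrier (Kmon (PCat M))" "y \<in> carrier (Kmon (PCat M))" "?\<psi> x = ?\<psi> y"
    then obtain X Y where XY: "X \<in> ob M" "Y \<in> ob M" "x = iso_class (PCat M) X" "y = iso_class (PCat M) Y"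
      and "Ucls (Kmon M) (iso_class M X) = Ucls (Kmon M) (iso_class M Y)"
      unfolding carrier_P using Ucls_Kmap_PCat by auto
    then have "isomorphic (PCat M) X Y" using Ucls_eq_iff isomorphic_PCat_iff by blast
    then show "x = y" unfolding XY(3,4) by (rule P.iso_class_eqI)
  qed
  moreover have "?\<psi> ` carrier (Kmon (PCat M)) = carrier (Umod (Kmon M))"
    unfolding carrier_P carrier_U using Ucls_Kmap_PCat by (auto simp: image_image)
  ultimately show ?thesis unfolding iso_def bij_betw_def by blast
qed

lemma Ucls_Kmap_Kmap:
  assumes "x \<in> carrier (Kmon M)"
  shows "Ucls (Kmon M) (Kmap (PCat M) M id (Kmap M (PCat M) id x)) = Ucls (Kmon M) x"
proof -
  obtain X where X: "X \<in> ob M" "x = iso_class M X" using assms unfolding K.Kmon_carrier by blast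
  have "Kmap M (PCat M) id x = iso_class (PCat M) X"
    unfolding X(2) using X(1) isomorphic_PCat_iff pic_equiv_of_isomorphic
    by (subst Kmap_iso_class[OF iso_congruence_M iso_congruence_PCat]) simp_all
  then show ?thesis using Ucls_Kmap_PCat X by simp
qed

end

section \<open>Symmetric monoidal equivalences\<close>

locale sym_mon_equivalence = M: symmetric_monoidal M + N: symmetric_monoidal N
  for M :: "('o,'m) smcat" and N :: "('p,'n) smcat" +
  fixes F :: "('o,'m,'p,'n) smfun"
  assumes sym_mon_equiv: "sym_mon_equiv M N F"
begin

lemma fob_ob: "X \<in> ob M \<Longrightarrow> fob F X \<in> ob N"
  using sym_mon_equiv unfolding sym_mon_equiv_def sym_mon_functor_def by simp

lemma fmor_mor: "f \<in> mor M \<Longrightarrow> fmor F f \<in> mor N"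
  "f \<in> mor M \<Longrightarrow> src N (fmor F f) = fob F (src M f)"
  "f \<in> mor M \<Longrightarrow> tgt N (fmor F f) = fob F (tgt M f)"
  using sym_mon_equiv unfolding sym_mon_equiv_def sym_mon_functor_def hom_in_def by simp_all

lemma fmor_ident: "X \<in> ob M \<Longrightarrow> fmor F (ident M X) = ident N (fob F X)"
  using sym_mon_equiv unfolding sym_mon_equiv_def sym_mon_functor_def by simp

lemma fmor_cmp: "f \<in> mor M \<Longrightarrow> g \<in> mor M \<Longrightarrow> tgt M f = src M g \<Longrightarrow>
    fmor F (cmp M g f) = cmp N (fmor F g) (fmor F f)"
  using sym_mon_equiv unfolding sym_mon_equiv_def sym_mon_functor_def by simp

lemma fphi0_iso: "hom_in N (fphi0 F) (unitob N) (fob F (unitob M))" "iso_in N (fphi0 F)"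
  using sym_mon_equiv unfolding sym_mon_equiv_def sym_mon_functor_def by simp_all

lemma fphi2_iso: "X \<in> ob M \<Longrightarrow> Y \<in> ob M \<Longrightarrow>
    hom_in N (fphi2 F X Y) (otens N (fob F X) (fob F Y)) (fob F (otens M X Y))"
  "X \<in> ob M \<Longrightarrow> Y \<in> ob M \<Longrightarrow> iso_in N (fphi2 F X Y)"
  using sym_mon_equiv unfolding sym_mon_equiv_def sym_mon_functor_def by simp_all

lemma fmor_full: "X \<in> ob M \<Longrightarrow> Y \<in> ob M \<Longrightarrow> hom_in N g (fob F X) (fob F Y) \<Longrightarrow>
    \<exists>f. hom_in M f X Y \<and> fmor F f = g"
  using sym_mon_equiv unfolding sym_mon_equiv_def by simp

lemma fmor_faithful: "hom_in M f X Y \<Longrightarrow> hom_in M f' X Y \<Longrightarrow> fmor F f = fmor F f' \<Longrightarrow> f = f'"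
  using sym_mon_equiv M.src_ob M.tgt_ob unfolding sym_mon_equiv_def hom_in_def by metis

lemma fob_ess_surj: "Y \<in> ob N \<Longrightarrow> \<exists>X \<in> ob M. isomorphic N (fob F X) Y"
  using sym_mon_equiv unfolding sym_mon_equiv_def by simp

lemma fob_isomorphic: assumes "isomorphic M X Y" shows "isomorphic N (fob F X) (fob F Y)"
proof -
  obtain f where f: "f \<in> mor M" "src M f = X" "tgt M f = Y" "iso_in M f"
    using assms by (rule M.isomorphicE)
  note f = f M.isomorphic_ob[OF assms]
  have "iso_in N (fmor F f)"
  proof (rule N.is_isoI[of _ "fmor F (inv_in M f)"])
    show "cmp N (fmor F (inv_in M f)) (fmor F f) = ident N (src N (fmor F f))"
      using f by (simp add: fmor_cmp[symmetric] fmor_ident fmor_mor)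
    show "cmp N (fmor F f) (fmor F (inv_in M f)) = ident N (tgt N (fmor F f))"
      using f by (simp add: fmor_cmp[symmetric] fmor_ident fmor_mor)
  qed (use f in \<open>simp_all add: fmor_mor\<close>)
  then show ?thesis using f by (intro N.isomorphicI[of "fmor F f"]) (simp_all add: fmor_mor)
qed

lemma fob_reflects_isomorphic:
  assumes o: "X \<in> ob M" "Y \<in> ob M" and i: "isomorphic N (fob F X) (fob F Y)"
  shows "isomorphic M X Y"
proof -
  obtain h where h: "h \<in> mor N" "src N h = fob F X" "tgt N h = fob F Y" "iso_in N h"
    using i by (rule N.isomorphicE)
  obtain f where f: "hom_in M f X Y" "fmor F f = h"
    using fmor_full[OF o, of h] h unfolding hom_in_def by auto
  obtain g where g: "hom_in M g Y X" "fmor F g = inv_in N h"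
    using fmor_full[OF o(2) o(1), of "inv_in N h"] h unfolding hom_in_def by auto
  have fg: "f \<in> mor M" "src M f = X" "tgt M f = Y" "g \<in> mor M" "src M g = Y" "tgt M g = X"
    using f g unfolding hom_in_def by auto
  have "cmp M g f = ident M X"
    by (rule fmor_faithful[of _ X X])
      (use fg f g h o in \<open>simp_all add: hom_in_def fmor_cmp fmor_ident\<close>)
  moreover have "cmp M f g = ident M Y"
    by (rule fmor_faithful[of _ Y Y])
      (use fg f g h o in \<open>simp_all add: hom_in_def fmor_cmp fmor_ident\<close>)
  ultimately have "iso_in M f" using fg by (intro M.is_isoI[of _ g]) simp_all
  then show ?thesis using fg by (intro M.isomorphicI[of f]) simp_all
qed

lemma fob_otens:
  "X \<in> ob M \<Longrightarrow> Y \<in> ob M \<Longrightarrow> isomorphic N (fob F (otens M X Y)) (otens N (fob F X) (fob F Y))"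
  using fphi2_iso[of X Y] unfolding hom_in_def
  by (intro N.isomorphicI[of "fphi2 F X Y", THEN N.isomorphic_sym]) simp_all

lemma fob_unit: "isomorphic N (fob F (unitob M)) (unitob N)"
  using fphi0_iso unfolding hom_in_def
  by (intro N.isomorphicI[of "fphi0 F", THEN N.isomorphic_sym]) simp_all

lemma fob_unit_otens:
  assumes "X \<in> ob M" "Y \<in> ob M"
  shows "isomorphic N (otens N (fob F X) (fob F Y)) (unitob N) \<longleftrightarrow>
    isomorphic M (otens M X Y) (unitob M)"
proof -
  note XY = fob_otens[OF assms] and I = fob_unit
  have "isomorphic N (otens N (fob F X) (fob F Y)) (unitob N) \<longleftrightarrow>
      isomorphic N (fob F (otens M X Y)) (fob F (unitob M))"
    using N.isomorphic_trans[OF N.isomorphic_trans[OF XY] N.isomorphic_sym[OF I]]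
      N.isomorphic_trans[OF N.isomorphic_trans[OF N.isomorphic_sym[OF XY]] I] by blast
  also have "\<dots> \<longleftrightarrow> isomorphic M (otens M X Y) (unitob M)"
    using fob_isomorphic fob_reflects_isomorphic assms by auto
  finally show ?thesis .
qed

lemma fob_wi_iff: assumes X: "X \<in> ob M" shows "N.wi (fob F X) \<longleftrightarrow> M.wi X"
proof
  assume "M.wi X"
  then obtain B where "B \<in> ob M"
    "isomorphic M (otens M X B) (unitob M)" "isomorphic M (otens M B X) (unitob M)"
    unfolding M.wi_iff by blast
  then show "N.wi (fob F X)" unfolding N.wi_iff using X fob_ob fob_unit_otens by blast
next
  assume "N.wi (fob F X)"
  then obtain B' where B': "B' \<in> ob N" "isomorphic N (otens N (fob F X) B') (unitob N)"
    "isomorphic N (otens N B' (fob F X)) (unitob N)"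
    unfolding N.wi_iff by blast
  obtain B where B: "B \<in> ob M" "isomorphic N (fob F B) B'" using fob_ess_surj[OF B'(1)] by blast
  have "isomorphic N (otens N (fob F X) (fob F B)) (unitob N)"
    "isomorphic N (otens N (fob F B) (fob F X)) (unitob N)"
    using B'(2,3) N.isomorphic_otens[OF N.isomorphic_refl B(2)]
      N.isomorphic_otens[OF B(2) N.isomorphic_refl] N.isomorphic_trans X fob_ob by blast+
  then show "M.wi X" unfolding M.wi_iff using X B(1) fob_unit_otens by blast
qed

lemma fob_pic_equiv_iff: assumes o: "X \<in> ob M" "Y \<in> ob M"
  shows "N.pic_equiv (fob F X) (fob F Y) \<longleftrightarrow> M.pic_equiv X Y"
proof
  assume "M.pic_equiv X Y"
  then obtain A where A: "M.wi A" "isomorphic M X (otens M Y A)" unfolding M.pic_equiv_def by blast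
  have "isomorphic N (fob F X) (otens N (fob F Y) (fob F A))"
    using N.isomorphic_trans[OF fob_isomorphic[OF A(2)] fob_otens[OF o(2) M.wi_ob[OF A(1)]]] .
  then show "N.pic_equiv (fob F X) (fob F Y)"
    unfolding N.pic_equiv_def using fob_wi_iff M.wi_ob A(1) fob_ob o by blast
next
  assume "N.pic_equiv (fob F X) (fob F Y)"
  then obtain A' where A': "N.wi A'" "isomorphic N (fob F X) (otens N (fob F Y) A')"
    unfolding N.pic_equiv_def by blast
  obtain A where A: "A \<in> ob M" "isomorphic N (fob F A) A'" using fob_ess_surj N.wi_ob[OF A'(1)] by blast
  have "M.wi A" using fob_wi_iff[OF A(1)] N.wi_isomorphic[OF A'(1) N.isomorphic_sym[OF A(2)]] by blast
  have "isomorphic N (fob F X) (otens N (fob F Y) (fob F A))"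
    using N.isomorphic_trans[OF A'(2) N.isomorphic_otens[OF N.isomorphic_refl N.isomorphic_sym[OF A(2)]]]
      fob_ob o by blast
  also have "isomorphic N \<dots> (fob F (otens M Y A))" by (rule N.isomorphic_sym[OF fob_otens[OF o(2) A(1)]])
  finally have "isomorphic M X (otens M Y A)" by (rule fob_reflects_isomorphic[rotated 2]) (use o A in simp_all)
  then show "M.pic_equiv X Y" unfolding M.pic_equiv_def using \<open>M.wi A\<close> o by blast
qed

lemma fob_isomorphic_PicCat:
  "isomorphic (PicCat M) X Y \<Longrightarrow> isomorphic (PicCat N) (fob F X) (fob F Y)"
  unfolding M.isomorphic_PicCat_iff N.isomorphic_PicCat_iff using fob_isomorphic fob_wi_iff M.wi_ob by blast

lemma fob_isomorphic_PCat:
  "isomorphic (PCat M) X Y \<Longrightarrow> isomorphic (PCat N) (fob F X) (fob F Y)"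
  unfolding M.isomorphic_PCat_iff N.isomorphic_PCat_iff using fob_pic_equiv_iff M.pic_equiv_ob by blast

lemma Kmap_PicCat_iso: "Kmap (PicCat M) (PicCat N) (fob F) \<in> iso (Kmon (PicCat M)) (Kmon (PicCat N))"
proof (rule Kmap_iso[OF M.iso_congruence_PicCat N.iso_congruence_PicCat fob_isomorphic_PicCat,
      where S = "{A. N.wi A}"])
  fix X Y assume XY: "X \<in> ob (PicCat M)" "Y \<in> ob (PicCat M)"
  then have w: "M.wi X" "M.wi Y" "X \<in> ob M" "Y \<in> ob M" unfolding M.PicCat_simps using M.wi_ob by auto
  show "isomorphic (PicCat N) (fob F X) (fob F Y) \<Longrightarrow> isomorphic (PicCat M) X Y"
    unfolding M.isomorphic_PicCat_iff N.isomorphic_PicCat_iff using w fob_reflects_isomorphic by blast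
  show "isomorphic (PicCat N) (fob F (otens (PicCat M) X Y)) (otens (PicCat N) (fob F X) (fob F Y))"
    unfolding N.isomorphic_PicCat_iff M.PicCat_simps N.PicCat_simps
    using w fob_otens fob_wi_iff M.wi_otens N.wi_otens by simp
next
  fix Y assume "Y \<in> {A. N.wi A}"
  then obtain X where X: "X \<in> ob M" "isomorphic N (fob F X) Y" "N.wi Y"
    using fob_ess_surj N.wi_ob by blast
  then have "M.wi X" using fob_wi_iff N.wi_isomorphic N.isomorphic_sym by blast
  then show "\<exists>X \<in> ob (PicCat M). isomorphic (PicCat N) (fob F X) Y"
    unfolding M.PicCat_simps N.isomorphic_PicCat_iff using X fob_wi_iff by blast
qed (auto simp: M.PicCat_simps N.PicCat_simps N.Pic.Kmon_carrier fob_wi_iff M.wi_ob)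

lemma Kmap_Kmon_iso: "Kmap M N (fob F) \<in> iso (Kmon M) (Kmon N)"
  by (rule Kmap_iso[OF M.iso_congruence_M N.iso_congruence_M fob_isomorphic fob_reflects_isomorphic
        fob_otens fob_ob subset_refl fob_ess_surj N.K.Kmon_carrier refl])

lemma Kmap_PCat_iso: "Kmap (PCat M) (PCat N) (fob F) \<in> iso (Kmon (PCat M)) (Kmon (PCat N))"
proof (rule Kmap_iso[OF M.iso_congruence_PCat N.iso_congruence_PCat fob_isomorphic_PCat, where S = "ob N"])
  fix X Y assume "X \<in> ob (PCat M)" "Y \<in> ob (PCat M)"
  then have o: "X \<in> ob M" "Y \<in> ob M" unfolding M.PCat_simps .
  show "isomorphic (PCat N) (fob F X) (fob F Y) \<Longrightarrow> isomorphic (PCat M) X Y"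
    unfolding M.isomorphic_PCat_iff N.isomorphic_PCat_iff fob_pic_equiv_iff[OF o] .
  show "isomorphic (PCat N) (fob F (otens (PCat M) X Y)) (otens (PCat N) (fob F X) (fob F Y))"
    unfolding N.isomorphic_PCat_iff M.PCat_simps N.PCat_simps
    by (rule N.pic_equiv_of_isomorphic[OF fob_otens[OF o]])
next
  fix Y assume "Y \<in> ob N"
  then obtain X where "X \<in> ob M" "isomorphic N (fob F X) Y" using fob_ess_surj by blast
  then show "\<exists>X \<in> ob (PCat M). isomorphic (PCat N) (fob F X) Y"
    unfolding M.PCat_simps N.isomorphic_PCat_iff using N.pic_equiv_of_isomorphic by blast
qed (auto simp: M.PCat_simps N.PCat_simps N.P.Kmon_carrier fob_ob)

lemma Kmap_PicCat_commutes:
  assumes "c \<in> carrier (Kmon (PicCat M))"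
  shows "Kmap (PicCat N) N id (Kmap (PicCat M) (PicCat N) (fob F) c) =
    Kmap M N (fob F) (Kmap (PicCat M) M id c)"
proof -
  have "Kmap (PicCat N) N id (Kmap (PicCat M) (PicCat N) (fob F) c) = Kmap (PicCat M) N (id \<circ> fob F) c"
    by (rule Kmap_Kmap[OF M.iso_congruence_PicCat N.iso_congruence_PicCat N.iso_congruence_M
          fob_isomorphic_PicCat _ assms]) (auto simp: N.isomorphic_PicCat_iff)
  also have "\<dots> = Kmap M N (fob F) (Kmap (PicCat M) M id c)"
    using Kmap_Kmap[OF M.iso_congruence_PicCat M.iso_congruence_M N.iso_congruence_M
        _ fob_isomorphic assms]
    by (simp add: M.isomorphic_PicCat_iff)
  finally show ?thesis .
qed

lemma Kmap_PCat_commutes: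
  assumes "x \<in> carrier (Kmon M)"
  shows "Kmap (PCat M) (PCat N) (fob F) (Kmap M (PCat M) id x) =
    Kmap N (PCat N) id (Kmap M N (fob F) x)"
proof -
  have "Kmap (PCat M) (PCat N) (fob F) (Kmap M (PCat M) id x) = Kmap M (PCat N) (fob F \<circ> id) x"
    by (rule Kmap_Kmap[OF M.iso_congruence_M M.iso_congruence_PCat N.iso_congruence_PCat
          _ fob_isomorphic_PCat assms]) (simp add: M.isomorphic_PCat_iff M.pic_equiv_of_isomorphic)
  also have "\<dots> = Kmap N (PCat N) id (Kmap M N (fob F) x)"
    using Kmap_Kmap[OF M.iso_congruence_M N.iso_congruence_M N.iso_congruence_PCat
        fob_isomorphic _ assms]
    by (simp add: N.isomorphic_PCat_iff N.pic_equiv_of_isomorphic)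
  finally show ?thesis .
qed

end

theorem proposition8p1:
  fixes M :: "('o, 'm) smcat"
  assumes "sym_mon_cat M"
  shows "(\<exists>\<phi> \<psi>.
            \<phi> \<in> iso (Kmon (PicCat M)) (units_of (Kmon M)) \<and>
            \<psi> \<in> iso (Kmon (PCat M)) (Umod (Kmon M)) \<and>
            (\<forall>c \<in> carrier (Kmon (PicCat M)). \<phi> c = Kmap (PicCat M) M id c) \<and>
            (\<forall>x \<in> carrier (Kmon M). \<psi> (Kmap M (PCat M) id x) = Ucls (Kmon M) x))
       \<and> (\<forall>(N :: ('p, 'n) smcat) (F :: ('o, 'm, 'p, 'n) smfun).
            sym_mon_cat N \<and> sym_mon_equiv M N F \<longrightarrow>
              Kmap (PicCat M) (PicCat N) (fob F) \<in> iso (Kmon (PicCat M)) (Kmon (PicCat N)) \<and>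
              Kmap M N (fob F) \<in> iso (Kmon M) (Kmon N) \<and>
              Kmap (PCat M) (PCat N) (fob F) \<in> iso (Kmon (PCat M)) (Kmon (PCat N)) \<and>
              (\<forall>c \<in> carrier (Kmon (PicCat M)).
                 Kmap (PicCat N) N id (Kmap (PicCat M) (PicCat N) (fob F) c)
                 = Kmap M N (fob F) (Kmap (PicCat M) M id c)) \<and>
              (\<forall>x \<in> carrier (Kmon M).
                 Kmap (PCat M) (PCat N) (fob F) (Kmap M (PCat M) id x)
                 = Kmap N (PCat N) id (Kmap M N (fob F) x)))"
proof -
  interpret symmetric_monoidal M by unfold_locales (fact assms)
  have equivalence: "sym_mon_equivalence M N F" if "sym_mon_cat N" "sym_mon_equiv M N F"
    for N :: "('p, 'n) smcat" and F :: "('o, 'm, 'p, 'n) smfun"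
    using assms that by unfold_locales
  show ?thesis
    using Kmap_PicCat_iso_units Kmon_PCat_iso_Umod Ucls_Kmap_Kmap
      sym_mon_equivalence.Kmap_PicCat_iso[OF equivalence] sym_mon_equivalence.Kmap_Kmon_iso[OF equivalence]
      sym_mon_equivalence.Kmap_PCat_iso[OF equivalence]
      sym_mon_equivalence.Kmap_PicCat_commutes[OF equivalence]
      sym_mon_equivalence.Kmap_PCat_commutes[OF equivalence]
    by (intro conjI allI impI ballI exI[where x = "Kmap (PicCat M) M id"]
        exI[where x = "\<lambda>c. Ucls (Kmon M) (Kmap (PCat M) M id c)"]) auto
qed

end
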